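(* Let $\mathcal{O}_{\rm cov}$ be the set of $G$-covariant channels from $A$ to $B$, let $\eta$ be a state of $R$ and $\tau$ a state of $A$. Then $$\Phi_\eta(\tau)=\max_{\mathcal{E}\in\mathcal{O}_{\rm cov}}\mathrm{tr}\big(\eta^T\mathcal{E}(\tau)\big),$$ where the transpose is taken in the fixed orthonormal basis $\{|i\rangle\}$ of $\mathcal{H}_R\cong\mathcal{H}_B$.
   Context: $G$ is a compact group with normalized Haar measure $dg$; finite-dimensional systems $A,B$ carry continuous unitary representations $U_A,U_B$. The reference $R$ has $\mathcal{H}_R$ of dimension $d_B$, identified with $\mathcal{H}_B$ via a fixed orthonormal basis $\{|i\rangle\}$, and carries $U_R(g)=\overline{U_B(g)}$ (entrywise complex conjugate in that basis). A channel $\mathcal{E}$ from $A$ to $B$ is $G$-covariant if $\mathcal{E}(U_A(g)XU_A(g)^\dagger)=U_B(g)\mathcal{E}(X)U_B(g)^\dagger$ for all $g,X$. On $RA$, $\mathcal{G}(M)=\int dg\,(U_R(g)\otimes U_A(g))M(U_R(g)\otimes U_A(g))^\dagger$. $\Phi_\eta(\tau):=\inf_{X\ge0}\{\mathrm{tr}[X]:\mathbb{1}_R\otimes X-\mathcal{G}(\eta\otimes\tau)\ge0\}$ (equivalently $2^{-H_{\min}(R|A)_{\mathcal{G}(\eta\otimes\tau)}}$). *)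

theory Defs
  imports "HOL-Analysis.Analysis" "HOL-Library.Complex_Order"
begin

text \<open>Operators on a finite-dimensional Hilbert space with orthonormal basis indexed by a
  finite type are represented by their matrices in that basis, i.e. functions
  from row index and column index to complex numbers.\<close>

type_synonym ('i, 'j) cmat = "'i \<Rightarrow> 'j \<Rightarrow> complex"

definition mmul :: "('i, 'j::finite) cmat \<Rightarrow> ('j, 'k) cmat \<Rightarrow> ('i, 'k) cmat" where
  "mmul M N = (\<lambda>i k. \<Sum>j\<in>UNIV. M i j * N j k)"

definition madj :: "('i, 'j) cmat \<Rightarrow> ('j, 'i) cmat" where
  "madj M = (\<lambda>i j. cnj (M j i))"

definition mtransp :: "('i, 'j) cmat \<Rightarrow> ('j, 'i) cmat" where
  "mtransp M = (\<lambda>i j. M j i)"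

definition mconj :: "('i, 'j) cmat \<Rightarrow> ('i, 'j) cmat" where
  "mconj M = (\<lambda>i j. cnj (M i j))"

definition madd :: "('i, 'j) cmat \<Rightarrow> ('i, 'j) cmat \<Rightarrow> ('i, 'j) cmat" where
  "madd M N = (\<lambda>i j. M i j + N i j)"

definition msub :: "('i, 'j) cmat \<Rightarrow> ('i, 'j) cmat \<Rightarrow> ('i, 'j) cmat" where
  "msub M N = (\<lambda>i j. M i j - N i j)"

definition mid :: "('i, 'i) cmat" where
  "mid = (\<lambda>i j. if i = j then 1 else 0)"

definition mtr :: "('i::finite, 'i) cmat \<Rightarrow> complex" where
  "mtr M = (\<Sum>i\<in>UNIV. M i i)"

definition mtensor :: "('i, 'j) cmat \<Rightarrow> ('k, 'l) cmat \<Rightarrow> ('i \<times> 'k, 'j \<times> 'l) cmat" where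
  "mtensor M N = (\<lambda>(i, k) (j, l). M i j * N k l)"

definition psd_on :: "'i set \<Rightarrow> ('i, 'i) cmat \<Rightarrow> bool" where
  "psd_on S M \<longleftrightarrow> (\<forall>v :: 'i \<Rightarrow> complex.
      0 \<le> (\<Sum>x\<in>S. \<Sum>y\<in>S. cnj (v x) * M x y * v y))"

definition psd :: "('i::finite, 'i) cmat \<Rightarrow> bool" where
  "psd M \<longleftrightarrow> psd_on UNIV M"

definition is_state :: "('i::finite, 'i) cmat \<Rightarrow> bool" where
  "is_state \<rho> \<longleftrightarrow> psd \<rho> \<and> mtr \<rho> = 1"

definition unitary_mat :: "('i::finite, 'i) cmat \<Rightarrow> bool" where
  "unitary_mat U \<longleftrightarrow> mmul U (madj U) = mid \<and> mmul (madj U) U = mid"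

text \<open>Linear maps between operator spaces, complete positivity (id_n \<otimes> E positive for every
  ancilla dimension n, the ancilla basis being indexed by {..<n}), trace preservation.\<close>
definition linear_map :: "(('a, 'a) cmat \<Rightarrow> ('b, 'b) cmat) \<Rightarrow> bool" where
  "linear_map E \<longleftrightarrow> (\<forall>X Y. E (madd X Y) = madd (E X) (E Y))
     \<and> (\<forall>(c::complex) X. E (\<lambda>i j. c * X i j) = (\<lambda>i j. c * E X i j))"

definition ampl :: "(('a, 'a) cmat \<Rightarrow> ('b, 'b) cmat) \<Rightarrow> (nat \<times> 'a, nat \<times> 'a) cmat
    \<Rightarrow> (nat \<times> 'b, nat \<times> 'b) cmat" where
  "ampl E X = (\<lambda>(k, b) (l, b'). E (\<lambda>a a'. X (k, a) (l, a')) b b')"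

definition completely_positive :: "(('a, 'a) cmat \<Rightarrow> ('b, 'b) cmat) \<Rightarrow> bool" where
  "completely_positive E \<longleftrightarrow> (\<forall>n X. psd_on ({..<n} \<times> UNIV) X \<longrightarrow>
       psd_on ({..<n} \<times> UNIV) (ampl E X))"

definition quantum_channel :: "(('a::finite, 'a) cmat \<Rightarrow> ('b::finite, 'b) cmat) \<Rightarrow> bool" where
  "quantum_channel E \<longleftrightarrow> linear_map E \<and> completely_positive E \<and> (\<forall>X. mtr (E X) = mtr X)"

text \<open>Compact group G (group operation written additively, not assumed commutative)
  with normalized Haar measure mu, and continuous unitary representations.\<close>
definition haar_prob :: "'g::topological_group_add measure \<Rightarrow> bool" where
  "haar_prob \<mu> \<longleftrightarrow> sets \<mu> = sets borel \<and> emeasure \<mu> (space \<mu>) = 1 \<and>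
     (\<forall>g A. A \<in> sets \<mu> \<longrightarrow> emeasure \<mu> ((\<lambda>x. g + x) -` A) = emeasure \<mu> A) \<and>
     (\<forall>g A. A \<in> sets \<mu> \<longrightarrow> emeasure \<mu> ((\<lambda>x. x + g) -` A) = emeasure \<mu> A)"

definition cont_unitary_rep :: "('g::topological_group_add \<Rightarrow> ('i::finite, 'i) cmat) \<Rightarrow> bool" where
  "cont_unitary_rep U \<longleftrightarrow> (\<forall>g. unitary_mat (U g)) \<and> (\<forall>g h. U (g + h) = mmul (U g) (U h))
     \<and> (\<forall>i j. continuous_on UNIV (\<lambda>g. U g i j))"

definition covariant :: "('g \<Rightarrow> ('a::finite, 'a) cmat) \<Rightarrow> ('g \<Rightarrow> ('b::finite, 'b) cmat)
    \<Rightarrow> (('a, 'a) cmat \<Rightarrow> ('b, 'b) cmat) \<Rightarrow> bool" where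
  "covariant UA UB E \<longleftrightarrow> (\<forall>g X. E (mmul (mmul (UA g) X) (madj (UA g)))
        = mmul (mmul (UB g) (E X)) (madj (UB g)))"

text \<open>The twirl on RA, with U_R(g) the entrywise complex conjugate of U_B(g).\<close>
definition twirl :: "'g measure \<Rightarrow> ('g \<Rightarrow> ('a::finite, 'a) cmat) \<Rightarrow> ('g \<Rightarrow> ('b::finite, 'b) cmat)
    \<Rightarrow> ('b \<times> 'a, 'b \<times> 'a) cmat \<Rightarrow> ('b \<times> 'a, 'b \<times> 'a) cmat" where
  "twirl \<mu> UA UB M = (\<lambda>x y. integral\<^sup>L \<mu> (\<lambda>g.
      mmul (mmul (mtensor (mconj (UB g)) (UA g)) M) (madj (mtensor (mconj (UB g)) (UA g))) x y))"

definition Phi :: "'g measure \<Rightarrow> ('g \<Rightarrow> ('a::finite, 'a) cmat) \<Rightarrow> ('g \<Rightarrow> ('b::finite, 'b) cmat)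
    \<Rightarrow> ('b, 'b) cmat \<Rightarrow> ('a, 'a) cmat \<Rightarrow> real" where
  "Phi \<mu> UA UB \<eta> \<tau> = Inf {Re (mtr X) | X. psd X \<and>
      psd (msub (mtensor (mid :: ('b, 'b) cmat) X) (twirl \<mu> UA UB (mtensor \<eta> \<tau>)))}"

end

theory Submission
  imports Defs
begin

text \<open>A channel \<open>E\<close> is determined by its Choi matrix \<open>Y\<close>, normalised here so that
  \<open>tr (\<eta>\<^sup>T E \<tau>) = tr ((\<eta> \<otimes> \<tau>) Y)\<close>; \<open>E\<close> is a channel iff \<open>Y \<ge> 0\<close> and \<open>tr\<^sub>R Y = 1\<close>, and \<open>E\<close> is
  covariant iff \<open>Y\<close> commutes with \<open>W g = conj (U\<^sub>B g) \<otimes> U\<^sub>A g\<close>. For invariant \<open>Y\<close> the objective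
  \<open>tr ((\<eta> \<otimes> \<tau>) Y)\<close> equals \<open>tr (\<rho> Y)\<close> with \<open>\<rho> = \<G> (\<eta> \<otimes> \<tau>)\<close>, so by weak duality it is at most
  \<open>\<Phi>\<^sub>\<eta>(\<tau>) = inf {tr X | 1 \<otimes> X \<ge> \<rho>}\<close>, the primal value of the semidefinite program whose dual is
  \<open>max {tr (\<rho> Y) | Y \<ge> 0, tr\<^sub>R Y = 1}\<close>. Conversely, averaging an optimal dual \<open>Y\<close> over the group
  (conjugating by \<open>W (- g)\<close>) keeps it feasible, does not change its value because \<open>\<rho>\<close> is already
  twirled, and makes it invariant. Strong duality follows by separating the convex sets
  \<open>{(V, s) | V \<ge> 0, s \<le> \<Phi>}\<close> and \<open>{(V, s) | \<exists>X \<ge> 0. 1 \<otimes> X - \<rho> \<ge> V, tr X < s}\<close> by a hyperplane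
  and normalising the normal vector into a dual feasible point.\<close>

section \<open>Matrix algebra\<close>

abbreviation sandwich :: "('i, 'j::finite) cmat \<Rightarrow> ('j, 'j) cmat \<Rightarrow> ('i, 'i) cmat" where
  "sandwich W M \<equiv> mmul (mmul W M) (madj W)"

lemma sum_UNIV_prod:
  "(\<Sum>p\<in>(UNIV::('x::finite \<times> 'y::finite) set). f p) = (\<Sum>j\<in>UNIV. \<Sum>l\<in>UNIV. f (j, l))"
  unfolding UNIV_Times_UNIV[symmetric] sum.cartesian_product by (simp only: case_prod_eta)

lemma mmul_assoc: "mmul (mmul A B) C = mmul A (mmul B C)"
proof (intro ext)
  fix i k
  have "mmul (mmul A B) C i k = (\<Sum>j\<in>UNIV. \<Sum>l\<in>UNIV. A i l * B l j * C j k)"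
    unfolding mmul_def sum_distrib_right ..
  also have "\<dots> = (\<Sum>l\<in>UNIV. \<Sum>j\<in>UNIV. A i l * B l j * C j k)"
    by (rule sum.swap)
  also have "\<dots> = mmul A (mmul B C) i k"
    unfolding mmul_def sum_distrib_left by (simp add: mult.assoc)
  finally show "mmul (mmul A B) C i k = mmul A (mmul B C) i k" .
qed

lemma madj_mmul: "madj (mmul A B) = mmul (madj B) (madj A)"
  unfolding mmul_def madj_def by (auto simp: mult.commute)

lemma madj_madj [simp]: "madj (madj A) = A"
  unfolding madj_def by auto

lemma mtensor_apply: "mtensor A B (i, k) (j, l) = A i j * B k l"
  unfolding mtensor_def by simp

lemma mtensor_mmul: "mmul (mtensor A B) (mtensor C D) = mtensor (mmul A C) (mmul B D)"
proof (intro ext)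
  fix x y
  show "mmul (mtensor A B) (mtensor C D) x y = mtensor (mmul A C) (mmul B D) x y"
    unfolding mmul_def mtensor_def sum_UNIV_prod
    by (cases x; cases y) (simp add: sum_distrib_left sum_distrib_right mult_ac, rule sum.swap)
qed

lemma madj_mtensor: "madj (mtensor A B) = mtensor (madj A) (madj B)"
  unfolding madj_def mtensor_def by (auto simp: fun_eq_iff)

lemma mtensor_scale: "mtensor M (\<lambda>x y. c * X x y) = (\<lambda>p q. c * mtensor M X p q)"
  unfolding mtensor_def by (auto simp: fun_eq_iff)

lemma mmul_mid_left [simp]: "mmul mid A = A"
  unfolding mmul_def mid_def by (intro ext) (simp add: if_distrib[of "\<lambda>x. x * _"] cong: if_cong)

lemma mmul_mid_right [simp]: "mmul A mid = A"
  unfolding mmul_def mid_def by (intro ext) (simp add: if_distrib[of "\<lambda>x. _ * x"] cong: if_cong)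

lemma mtensor_mid: "mtensor mid mid = mid"
  unfolding mtensor_def mid_def by (auto simp: fun_eq_iff)

lemma madj_mid [simp]: "madj mid = mid"
  unfolding madj_def mid_def by (auto simp: fun_eq_iff)

lemma mconj_mmul: "mconj (mmul A B) = mmul (mconj A) (mconj B)"
  unfolding mconj_def mmul_def by auto

lemma madj_mconj: "madj (mconj A) = mconj (madj A)"
  unfolding mconj_def madj_def by auto

lemma mconj_mid [simp]: "mconj mid = mid"
  unfolding mconj_def mid_def by (auto simp: fun_eq_iff)

lemma unitary_mconj: "unitary_mat U \<Longrightarrow> unitary_mat (mconj U)"
  unfolding unitary_mat_def by (simp add: madj_mconj mconj_mmul[symmetric])

lemma mtransp_mmul: "mtransp (mmul A B) = mmul (mtransp B) (mtransp A)"
  unfolding mtransp_def mmul_def by (auto simp: fun_eq_iff mult.commute)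

lemma mtransp_madj_mconj: "mtransp (madj (mconj V)) = V"
  unfolding mtransp_def madj_def mconj_def by simp

lemma mtransp_mconj: "mtransp (mconj V) = madj V"
  unfolding mtransp_def madj_def mconj_def by simp

lemma mtr_mmul_commute: "mtr (mmul A B) = mtr (mmul B A)"
  unfolding mtr_def mmul_def by (subst sum.swap) (simp add: mult.commute)

lemma mtr_scale: "mtr (\<lambda>x y. c * X x y) = c * mtr X"
  unfolding mtr_def by (simp add: sum_distrib_left)

lemma mtr_mid: "mtr (mid :: ('i::finite, 'i) cmat) = of_nat (card (UNIV :: 'i set))"
  unfolding mtr_def mid_def by simp

lemma mtr_rank_one: "mtr (\<lambda>x y. w x * cnj (w y)) = complex_of_real (\<Sum>x\<in>UNIV. (cmod (w x))\<^sup>2)"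
  unfolding mtr_def of_real_sum by (intro sum.cong refl) (rule complex_norm_square[symmetric])

lemma mtr_mmul_msub: "mtr (mmul (msub A B) C) = mtr (mmul A C) - mtr (mmul B C)"
  unfolding mtr_def mmul_def msub_def by (simp add: algebra_simps sum_subtractf)

lemma mtr_mmul_madd: "mtr (mmul \<rho> (madd Y Z)) = mtr (mmul \<rho> Y) + mtr (mmul \<rho> Z)"
  unfolding mtr_def mmul_def madd_def by (simp add: distrib_left sum.distrib)

lemma mtr_mmul_scale: "mtr (mmul \<rho> (\<lambda>x y. c * Z x y)) = c * mtr (mmul \<rho> Z)"
  unfolding mtr_def mmul_def by (simp add: sum_distrib_left mult_ac)


section \<open>Positive semidefinite matrices\<close>

definition qform :: "'i set \<Rightarrow> ('i, 'i) cmat \<Rightarrow> ('i \<Rightarrow> complex) \<Rightarrow> complex" where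
  "qform S M v = (\<Sum>x\<in>S. \<Sum>y\<in>S. cnj (v x) * M x y * v y)"

lemma psd_on_iff_qform: "psd_on S M \<longleftrightarrow> (\<forall>v. 0 \<le> qform S M v)"
  unfolding psd_on_def qform_def ..

lemma psd_iff_qform: "psd M \<longleftrightarrow> (\<forall>v. 0 \<le> qform UNIV M v)"
  unfolding psd_def psd_on_iff_qform ..

lemma qform_uminus: "qform S (\<lambda>x y. - M x y) w = - qform S M w"
  unfolding qform_def by (simp add: sum_negf)

lemma complex_nonneg_iff: "(0::complex) \<le> z \<longleftrightarrow> Im z = 0 \<and> 0 \<le> Re z"
  by (auto simp: less_eq_complex_def)

lemma qform_restrict:
  assumes "finite S" "T \<subseteq> S" "\<forall>y\<in>S-T. v y = 0"
  shows "qform S M v = qform T M v"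
proof -
  have "qform S M v = (\<Sum>x\<in>T. \<Sum>y\<in>S. cnj (v x) * M x y * v y)"
    unfolding qform_def using assms by (intro sum.mono_neutral_right) auto
  also have "\<dots> = qform T M v"
    unfolding qform_def using assms by (intro sum.cong refl sum.mono_neutral_right) auto
  finally show ?thesis .
qed

lemma psd_on_subset: "finite S \<Longrightarrow> T \<subseteq> S \<Longrightarrow> psd_on S M \<Longrightarrow> psd_on T M"
proof (unfold psd_on_iff_qform, intro allI)
  fix v :: "'a \<Rightarrow> complex"
  assume fin: "finite S" and TS: "T \<subseteq> S" and psd: "\<forall>v. 0 \<le> qform S M v"
  let ?w = "\<lambda>y. if y \<in> T then v y else 0"
  have "qform T M v = qform T M ?w" unfolding qform_def by (intro sum.cong refl) auto
  also have "\<dots> = qform S M ?w" using fin TS by (intro qform_restrict[symmetric]) auto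
  finally show "0 \<le> qform T M v" using psd by simp
qed

lemma qform_two_points:
  assumes "finite S" "x \<in> S" "z \<in> S" "x \<noteq> z"
  shows "qform S M (\<lambda>y. if y = x then a else if y = z then b else 0) =
     cnj a * M x x * a + cnj a * M x z * b + cnj b * M z x * a + cnj b * M z z * b"
proof -
  have "qform S M (\<lambda>y. if y = x then a else if y = z then b else 0) =
        qform {x, z} M (\<lambda>y. if y = x then a else if y = z then b else 0)"
    using assms by (intro qform_restrict) auto
  then show ?thesis using assms(4) unfolding qform_def by (simp add: algebra_simps)
qed

lemma psd_on_diag_nonneg:
  assumes "finite S" "psd_on S M" "x \<in> S"
  shows "0 \<le> M x x"
proof -
  have "qform S M (\<lambda>y. if y = x then 1 else 0) = qform {x} M (\<lambda>y. if y = x then 1 else 0)"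
    using assms by (intro qform_restrict) auto
  then have "qform S M (\<lambda>y. if y = x then 1 else 0) = M x x" by (simp add: qform_def)
  then show ?thesis using assms(2) unfolding psd_on_iff_qform by metis
qed

lemma slope_eq_zero_if_affine_nonneg:
  fixes c d :: real
  assumes "\<forall>t. 0 \<le> t * c + d"
  shows "c = 0"
proof (rule ccontr)
  assume "c \<noteq> 0"
  then have "(- (\<bar>d\<bar> + 1) / c) * c + d = - (\<bar>d\<bar> + 1) + d" by simp
  moreover have "0 \<le> (- (\<bar>d\<bar> + 1) / c) * c + d" using assms by blast
  ultimately show False by linarith
qed

lemma nonpos_if_affine_bounded:
  fixes c d b :: real
  assumes "\<And>t. 0 \<le> t \<Longrightarrow> t * c + d \<le> b"
  shows "c \<le> 0"
proof (rule ccontr)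
  assume "\<not> c \<le> 0"
  then have c: "c > 0" by simp
  define t where "t = (\<bar>b\<bar> + \<bar>d\<bar> + 1) / c"
  have "t * c = \<bar>b\<bar> + \<bar>d\<bar> + 1" "0 \<le> t" unfolding t_def using c by simp_all
  then show False using assms[of t] by linarith
qed

lemma psd_on_hermitian:
  assumes fin: "finite S" and psd: "psd_on S M" and xS: "x \<in> S" and zS: "z \<in> S"
  shows "M z x = cnj (M x z)"
proof (cases "x = z")
  case True
  then show ?thesis
    using psd_on_diag_nonneg[OF fin psd xS] by (auto simp: complex_nonneg_iff complex_eq_iff)
next
  case False
  have dx: "Im (M x x) = 0" and dz: "Im (M z z) = 0"
    using psd_on_diag_nonneg[OF fin psd xS] psd_on_diag_nonneg[OF fin psd zS]
    by (auto simp: complex_nonneg_iff)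
  have "0 \<le> qform S M (\<lambda>y. if y = x then 1 else if y = z then 1 else 0)"
    using psd by (simp add: psd_on_iff_qform)
  then have im: "Im (M x z + M z x) = 0"
    using dx dz by (simp add: qform_two_points[OF fin xS zS False] complex_nonneg_iff)
  have "0 \<le> qform S M (\<lambda>y. if y = x then 1 else if y = z then \<i> else 0)"
    using psd by (simp add: psd_on_iff_qform)
  then have re: "Re (M x z - M z x) = 0"
    using dx dz by (simp add: qform_two_points[OF fin xS zS False] complex_nonneg_iff)
  show ?thesis using im re by (simp add: complex_eq_iff)
qed

text \<open>Testing the form on \<open>t e\<^sub>s + e\<^sub>y\<close> and \<open>i t e\<^sub>s + e\<^sub>y\<close> for all real \<open>t\<close>: a nonnegative
  affine function of \<open>t\<close> has slope zero.\<close>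
lemma psd_on_zero_diag_row:
  assumes fin: "finite S" and psd: "psd_on S M" and sS: "s \<in> S" and yS: "y \<in> S"
    and zero: "M s s = 0"
  shows "M s y = 0"
proof (cases "y = s")
  case True
  then show ?thesis using zero by simp
next
  case False
  have hy: "M y s = cnj (M s y)" using psd_on_hermitian[OF fin psd sS yS] .
  have slope: "\<forall>t::real. 0 \<le> t * (2 * Re (c * M s y)) + Re (M y y)" if "cmod c = 1" for c
  proof
    fix t :: real
    let ?v = "\<lambda>w. if w = s then cnj c * complex_of_real t else if w = y then 1 else 0"
    have "0 \<le> qform S M ?v" using psd by (simp add: psd_on_iff_qform)
    moreover have "Re (qform S M ?v) = t * (2 * Re (c * M s y)) + Re (M y y)"
      using zero hy False by (simp add: qform_two_points[OF fin sS yS] algebra_simps)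
    ultimately show "0 \<le> t * (2 * Re (c * M s y)) + Re (M y y)"
      by (simp add: complex_nonneg_iff)
  qed
  have "Re (M s y) = 0" using slope_eq_zero_if_affine_nonneg[OF slope[of 1]] by simp
  moreover have "Im (M s y) = 0"
    using slope_eq_zero_if_affine_nonneg[OF slope[of "- \<i>"]] by simp
  ultimately show ?thesis by (simp add: complex_eq_iff)
qed

lemma sum_sum_insert:
  assumes "finite S" "s \<notin> S"
  shows "(\<Sum>x\<in>insert s S. \<Sum>y\<in>insert s S. f x y) =
    f s s + (\<Sum>y\<in>S. f s y) + (\<Sum>x\<in>S. f x s) + (\<Sum>x\<in>S. \<Sum>y\<in>S. f x y)"
  using assms by (simp add: sum.insert sum.distrib algebra_simps)

text \<open>Schur complement: the value of the reduced form at \<open>v\<close> is the value of the full form at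
  \<open>v\<close> extended by the coordinate \<open>-\<beta>/r\<^sup>2\<close> at \<open>s\<close>, which minimises it.\<close>
lemma psd_on_schur_complement:
  fixes M :: "('i, 'i) cmat" and r :: real
  assumes fin: "finite S" and sS: "s \<notin> S" and psd: "psd_on (insert s S) M"
    and r: "r > 0" and Mss: "M s s = complex_of_real (r * r)"
  shows "psd_on S (\<lambda>x y. M x y - (M x s / r) * cnj (M y s / r))"
proof (unfold psd_on_iff_qform, intro allI)
  fix v :: "'i \<Rightarrow> complex"
  define \<beta> where "\<beta> = (\<Sum>y\<in>S. M s y * v y)"
  define \<alpha> where "\<alpha> = - \<beta> / complex_of_real (r * r)"
  define v' where "v' = (\<lambda>x. if x = s then \<alpha> else v x)"
  define q where "q = qform S M v"
  have herm: "M y x = cnj (M x y)" if "x \<in> insert s S" "y \<in> insert s S" for x y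
    using psd_on_hermitian[OF _ psd that] fin by simp
  have v'S: "v' x = v x" if "x \<in> S" for x using sS that unfolding v'_def by auto
  have cnj_\<beta>: "(\<Sum>x\<in>S. cnj (v x) * M x s) = cnj \<beta>"
    unfolding \<beta>_def cnj_sum using herm[of s] by (intro sum.cong refl) (simp add: mult.commute)
  have "qform (insert s S) M v' = cnj \<alpha> * M s s * \<alpha> + (\<Sum>y\<in>S. cnj \<alpha> * (M s y * v y))
       + (\<Sum>x\<in>S. cnj (v x) * M x s * \<alpha>) + q"
    unfolding qform_def sum_sum_insert[OF fin sS] q_def using v'S by (simp add: v'_def mult.assoc)
  also have "\<dots> = cnj \<alpha> * M s s * \<alpha> + cnj \<alpha> * \<beta> + cnj \<beta> * \<alpha> + q"
    by (simp add: \<beta>_def sum_distrib_left sum_distrib_right[symmetric] cnj_\<beta>)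
  also have "\<dots> = q - \<beta> * cnj \<beta> / complex_of_real (r * r)"
    using r unfolding \<alpha>_def Mss by (simp add: field_simps)
  finally have full: "qform (insert s S) M v' = q - \<beta> * cnj \<beta> / complex_of_real (r * r)" .
  have reduced: "qform S (\<lambda>x y. M x y - (M x s / r) * cnj (M y s / r)) v =
      q - (\<Sum>x\<in>S. cnj (v x) * (M x s / r)) * (\<Sum>y\<in>S. cnj (M y s / r) * v y)"
    unfolding q_def qform_def
    by (simp add: algebra_simps sum_subtractf sum_distrib_left sum_distrib_right)
  have right: "(\<Sum>y\<in>S. cnj (M y s / r) * v y) = \<beta> / r"
    unfolding \<beta>_def sum_divide_distrib using herm[of s] by (intro sum.cong refl) simp
  have left: "(\<Sum>x\<in>S. cnj (v x) * (M x s / r)) = cnj \<beta> / r"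
    using cnj_\<beta> by (simp add: sum_divide_distrib[symmetric])
  have "qform S (\<lambda>x y. M x y - (M x s / r) * cnj (M y s / r)) v = qform (insert s S) M v'"
    unfolding full reduced right left using r by (simp add: field_simps)
  then show "0 \<le> qform S (\<lambda>x y. M x y - (M x s / r) * cnj (M y s / r)) v"
    using psd by (simp add: psd_on_iff_qform)
qed

lemma psd_on_insert_split_rank_one:
  fixes M :: "('i, 'i) cmat"
  assumes fin: "finite S" and sS: "s \<notin> S" and psd: "psd_on (insert s S) M"
  obtains u where "\<And>y. y \<in> insert s S \<Longrightarrow> M s y = u s * cnj (u y)"
    and "\<And>x. x \<in> insert s S \<Longrightarrow> M x s = u x * cnj (u s)"
    and "psd_on S (\<lambda>x y. M x y - u x * cnj (u y))"
proof -
  have fin': "finite (insert s S)" using fin by simp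
  have herm: "M y x = cnj (M x y)" if "x \<in> insert s S" "y \<in> insert s S" for x y
    using psd_on_hermitian[OF fin' psd that] .
  have diag: "0 \<le> M s s" using psd_on_diag_nonneg[OF fin' psd] by simp
  show ?thesis
  proof (cases "M s s = 0")
    case True
    have "M s y = 0" if "y \<in> insert s S" for y
      using psd_on_zero_diag_row[OF fin' psd _ that True] by simp
    moreover from this have "M x s = 0" if "x \<in> insert s S" for x
      using herm[OF _ that, of s] that by simp
    moreover have "psd_on S M" using psd_on_subset[OF fin' _ psd] by blast
    ultimately show ?thesis by (intro that[of "\<lambda>_. 0"]) simp_all
  next
    case False
    define r where "r = sqrt (Re (M s s))"
    have r: "r > 0" and Mss: "M s s = complex_of_real (r * r)"
      using diag False unfolding r_def by (auto simp: complex_nonneg_iff complex_eq_iff)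
    define u where "u = (\<lambda>x. M x s / r)"
    have us: "u s = r" unfolding u_def Mss using r by simp
    show ?thesis
    proof (rule that)
      show "M s y = u s * cnj (u y)" if "y \<in> insert s S" for y
        using herm[OF that, of s] r by (simp add: us u_def Mss)
      show "M x s = u x * cnj (u s)" if "x \<in> insert s S" for x
        using r by (simp add: us u_def Mss)
      show "psd_on S (\<lambda>x y. M x y - u x * cnj (u y))"
        unfolding u_def by (rule psd_on_schur_complement[OF fin sS psd r Mss])
    qed
  qed
qed

lemma rank_one_sum_insert:
  fixes M :: "('i, 'i) cmat" and w :: "nat \<Rightarrow> 'i \<Rightarrow> complex"
  assumes row: "\<And>y. y \<in> insert s S \<Longrightarrow> M s y = u s * cnj (u y)"
    and col: "\<And>x. x \<in> insert s S \<Longrightarrow> M x s = u x * cnj (u s)"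
    and rest: "\<forall>x\<in>S. \<forall>y\<in>S. M x y - u x * cnj (u y) = (\<Sum>k<m. w k x * cnj (w k y))"
  shows "\<exists>(w' :: nat \<Rightarrow> 'i \<Rightarrow> complex) m'.
    \<forall>x\<in>insert s S. \<forall>y\<in>insert s S. M x y = (\<Sum>k<m'. w' k x * cnj (w' k y))"
proof -
  define w' where "w' = (\<lambda>k x. if k < m then (if x = s then 0 else w k x) else u x)"
  have "M x y = (\<Sum>k<Suc m. w' k x * cnj (w' k y))"
    if x: "x \<in> insert s S" and y: "y \<in> insert s S" for x y
  proof -
    have split: "(\<Sum>k<Suc m. w' k x * cnj (w' k y)) =
        (\<Sum>k<m. w' k x * cnj (w' k y)) + u x * cnj (u y)"
      by (simp add: w'_def)
    show ?thesis
    proof (cases "x = s \<or> y = s")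
      case True
      then have "(\<Sum>k<m. w' k x * cnj (w' k y)) = 0" by (auto simp: w'_def)
      moreover have "M x y = u x * cnj (u y)" using True row[OF y] col[OF x] by auto
      ultimately show ?thesis using split by simp
    next
      case False
      then have "(\<Sum>k<m. w' k x * cnj (w' k y)) = M x y - u x * cnj (u y)"
        using x y rest by (simp add: w'_def)
      then show ?thesis using split by simp
    qed
  qed
  then show ?thesis by blast
qed

lemma psd_on_rank_one_decomp:
  fixes M :: "('i, 'i) cmat"
  assumes "finite S" "psd_on S M"
  shows "\<exists>(w :: nat \<Rightarrow> 'i \<Rightarrow> complex) m. \<forall>x\<in>S. \<forall>y\<in>S. M x y = (\<Sum>k<m. w k x * cnj (w k y))"
  using assms
proof (induction S arbitrary: M rule: finite_induct)
  case empty
  then show ?case by auto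
next
  case (insert s S M)
  obtain u where row: "\<And>y. y \<in> insert s S \<Longrightarrow> M s y = u s * cnj (u y)"
    and col: "\<And>x. x \<in> insert s S \<Longrightarrow> M x s = u x * cnj (u s)"
    and psd: "psd_on S (\<lambda>x y. M x y - u x * cnj (u y))"
    using psd_on_insert_split_rank_one[OF insert.hyps insert.prems] by blast
  obtain w :: "nat \<Rightarrow> 'i \<Rightarrow> complex" and m
    where "\<forall>x\<in>S. \<forall>y\<in>S. M x y - u x * cnj (u y) = (\<Sum>k<m. w k x * cnj (w k y))"
    using insert.IH[OF psd] by blast
  then show ?case using rank_one_sum_insert[where M = M and u = u, OF row col] by simp
qed

lemma psd_on_sum_rank_one: "psd_on S (\<lambda>x y. \<Sum>k\<in>J. w k x * cnj (w k y))"
  unfolding psd_on_iff_qform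
proof
  fix v
  define z where "z = (\<lambda>k. \<Sum>x\<in>S. cnj (v x) * w k x)"
  have "qform S (\<lambda>x y. \<Sum>k\<in>J. w k x * cnj (w k y)) v =
     (\<Sum>x\<in>S. \<Sum>y\<in>S. \<Sum>k\<in>J. cnj (v x) * w k x * (cnj (w k y) * v y))"
    unfolding qform_def by (simp add: sum_distrib_left sum_distrib_right mult_ac)
  also have "\<dots> = (\<Sum>k\<in>J. \<Sum>x\<in>S. \<Sum>y\<in>S. cnj (v x) * w k x * (cnj (w k y) * v y))"
    by (subst sum.swap) (intro sum.cong refl, rule sum.swap)
  also have "\<dots> = (\<Sum>k\<in>J. complex_of_real ((cmod (z k))\<^sup>2))"
    unfolding z_def cnj_sum sum_product complex_norm_square by (simp add: mult_ac)
  finally show "0 \<le> qform S (\<lambda>x y. \<Sum>k\<in>J. w k x * cnj (w k y)) v"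
    by (simp add: complex_nonneg_iff sum_nonneg)
qed

lemma psd_on_rank_one: "psd_on S (\<lambda>x y. w x * cnj (w y))"
  using psd_on_sum_rank_one[of S "\<lambda>_. w" "{()}"] by simp

lemma psd_iff_rank_one_sum:
  fixes M :: "('i::finite, 'i) cmat"
  shows "psd M \<longleftrightarrow> (\<exists>(w :: nat \<Rightarrow> 'i \<Rightarrow> complex) m. M = (\<lambda>x y. \<Sum>k<m. w k x * cnj (w k y)))"
  using psd_on_rank_one_decomp[of UNIV M] psd_on_sum_rank_one[of UNIV]
  unfolding psd_def by (fastforce simp: fun_eq_iff)

lemma psd_rank_one: "psd (\<lambda>x y. w x * cnj (w y))"
  unfolding psd_def by (rule psd_on_rank_one)

lemma psd_zero: "psd (\<lambda>x y. 0)"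
  unfolding psd_def psd_on_def by simp

lemma psd_hermitian: "psd A \<Longrightarrow> A y x = cnj (A x y)"
  unfolding psd_def using psd_on_hermitian[of UNIV A x y] by simp

lemma psd_diag_nonneg: "psd A \<Longrightarrow> 0 \<le> A x x"
  unfolding psd_def using psd_on_diag_nonneg[of UNIV A x] by simp

lemma psd_madd: "psd A \<Longrightarrow> psd B \<Longrightarrow> psd (madd A B)"
  unfolding psd_iff_qform qform_def madd_def
  by (simp add: distrib_left distrib_right sum.distrib add_nonneg_nonneg)

lemma psd_scale:
  assumes "psd A" "0 \<le> c"
  shows "psd (\<lambda>x y. complex_of_real c * A x y)"
  unfolding psd_iff_qform
proof
  fix v
  have "qform UNIV (\<lambda>x y. complex_of_real c * A x y) v = complex_of_real c * qform UNIV A v"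
    unfolding qform_def by (simp add: sum_distrib_left mult_ac)
  then show "0 \<le> qform UNIV (\<lambda>x y. complex_of_real c * A x y) v"
    using assms unfolding psd_iff_qform by (simp add: complex_nonneg_iff)
qed

lemma psd_combination:
  assumes "psd A" "psd B" "0 \<le> u" "0 \<le> v"
  shows "psd (\<lambda>x y. complex_of_real u * A x y + complex_of_real v * B x y)"
  using psd_madd[OF psd_scale[OF assms(1,3)] psd_scale[OF assms(2,4)]] unfolding madd_def .

lemma qform_mid:
  fixes v :: "'i::finite \<Rightarrow> complex"
  shows "qform UNIV mid v = complex_of_real (\<Sum>x\<in>UNIV. (cmod (v x))\<^sup>2)"
proof -
  have "qform UNIV mid v = (\<Sum>x\<in>UNIV. cnj (v x) * v x)"
    unfolding qform_def mid_def by (simp add: if_distrib[of "\<lambda>z. _ * z * _"] sum.delta sum.delta' cong: if_cong)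
  then show ?thesis unfolding of_real_sum complex_norm_square by (simp add: mult.commute)
qed

lemma psd_mid: "psd (mid :: ('i::finite, 'i) cmat)"
  unfolding psd_iff_qform qform_mid by (simp add: complex_nonneg_iff sum_nonneg)

lemma mtr_psd_nonneg: "psd X \<Longrightarrow> 0 \<le> Re (mtr X)"
  unfolding mtr_def using psd_diag_nonneg[of X] by (simp add: sum_nonneg complex_nonneg_iff)

lemma psd_eq_zero_if_mtr_nonpos:
  fixes H :: "('i::finite, 'i) cmat"
  assumes psd: "psd H" and trace: "Re (mtr H) \<le> 0"
  shows "H = (\<lambda>x y. 0)"
proof -
  have diag: "H x x = 0" for x
  proof -
    have nonneg: "0 \<le> Re (H y y)" for y
      using psd_diag_nonneg[OF psd] by (simp add: complex_nonneg_iff)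
    have "(\<Sum>y\<in>UNIV. Re (H y y)) = 0"
      using trace nonneg unfolding mtr_def Re_sum by (meson antisym sum_nonneg)
    then have "Re (H x x) = 0" using nonneg by (subst (asm) sum_nonneg_eq_0_iff) auto
    moreover have "Im (H x x) = 0" using psd_diag_nonneg[OF psd] by (simp add: complex_nonneg_iff)
    ultimately show ?thesis by (simp add: complex_eq_iff)
  qed
  show ?thesis
    using psd_on_zero_diag_row[of UNIV H] psd diag unfolding psd_def by (auto simp: fun_eq_iff)
qed

definition col :: "('i \<Rightarrow> complex) \<Rightarrow> ('i, unit) cmat" where
  "col v = (\<lambda>i _. v i)"

lemma qform_as_mmul: "qform UNIV M v = mmul (mmul (madj (col v)) M) (col v) () ()"
  unfolding qform_def mmul_def madj_def col_def
  by (simp add: sum_distrib_right sum_distrib_left mult.assoc) (rule sum.swap)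

lemma psd_sandwich:
  fixes W :: "('j::finite, 'i::finite) cmat"
  assumes "psd M"
  shows "psd (sandwich W M)"
  unfolding psd_iff_qform
proof
  fix v :: "'j \<Rightarrow> complex"
  define w where "w = (\<lambda>i. mmul (madj W) (col v) i ())"
  have cw: "col w = mmul (madj W) (col v)" unfolding w_def col_def by (auto simp: fun_eq_iff)
  have "qform UNIV (sandwich W M) v = qform UNIV M w"
    unfolding qform_as_mmul cw madj_mmul madj_madj mmul_assoc ..
  then show "0 \<le> qform UNIV (sandwich W M) v"
    using assms unfolding psd_iff_qform by simp
qed

lemma mtr_mmul_psd_nonneg:
  fixes P Q :: "('i::finite, 'i) cmat"
  assumes "psd P" "psd Q"
  shows "0 \<le> mtr (mmul P Q)"
proof -
  obtain w :: "nat \<Rightarrow> 'i \<Rightarrow> complex" and m where Q: "Q = (\<lambda>x y. \<Sum>k<m. w k x * cnj (w k y))"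
    using assms(2) psd_iff_rank_one_sum by blast
  have "mtr (mmul P Q) = (\<Sum>x\<in>UNIV. \<Sum>y\<in>UNIV. \<Sum>k<m. P x y * w k y * cnj (w k x))"
    unfolding Q mtr_def mmul_def by (simp add: sum_distrib_left mult_ac)
  also have "\<dots> = (\<Sum>k<m. \<Sum>x\<in>UNIV. \<Sum>y\<in>UNIV. P x y * w k y * cnj (w k x))"
    by (subst sum.swap) (intro sum.cong refl, rule sum.swap)
  also have "\<dots> = (\<Sum>k<m. qform UNIV P (w k))"
    unfolding qform_def by (simp add: mult_ac)
  also have "0 \<le> \<dots>" using assms(1) unfolding psd_iff_qform by (simp add: sum_nonneg)
  finally show ?thesis .
qed

lemma psd_mtensor:
  fixes A :: "('i::finite, 'i) cmat" and B :: "('j::finite, 'j) cmat"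
  assumes "psd A" "psd B"
  shows "psd (mtensor A B)"
proof -
  obtain a :: "nat \<Rightarrow> 'i \<Rightarrow> complex" and m where A: "A = (\<lambda>x y. \<Sum>k<m. a k x * cnj (a k y))"
    using assms(1) psd_iff_rank_one_sum by blast
  obtain b :: "nat \<Rightarrow> 'j \<Rightarrow> complex" and n where B: "B = (\<lambda>x y. \<Sum>k<n. b k x * cnj (b k y))"
    using assms(2) psd_iff_rank_one_sum by blast
  define w where "w = (\<lambda>(k, l) (x, y). a k x * b l y)"
  have "mtensor A B = (\<lambda>x y. \<Sum>p\<in>{..<m}\<times>{..<n}. w p x * cnj (w p y))"
    unfolding A B mtensor_def w_def sum_product sum.cartesian_product
    by (auto simp: fun_eq_iff mult_ac intro!: sum.cong)
  then show ?thesis using psd_on_sum_rank_one[of UNIV w] unfolding psd_def by simp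
qed

lemma psd_mtransp:
  assumes "psd M"
  shows "psd (mtransp M)"
  unfolding psd_iff_qform
proof
  fix v
  have "qform UNIV (mtransp M) v = qform UNIV M (\<lambda>x. cnj (v x))"
    unfolding qform_def mtransp_def by (subst sum.swap) (simp add: mult_ac)
  then show "0 \<le> qform UNIV (mtransp M) v" using assms unfolding psd_iff_qform by simp
qed

lemma psd_reindex:
  fixes g :: "'j::finite \<Rightarrow> 'i"
  assumes "inj g" "psd_on (range g) M"
  shows "psd (\<lambda>x y. M (g x) (g y))"
  unfolding psd_iff_qform
proof
  fix v :: "'j \<Rightarrow> complex"
  have "qform UNIV (\<lambda>x y. M (g x) (g y)) v = qform (range g) M (\<lambda>i. v (inv g i))"
    unfolding qform_def sum.reindex[OF assms(1)] using assms(1) by simp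
  then show "0 \<le> qform UNIV (\<lambda>x y. M (g x) (g y)) v"
    using assms(2) unfolding psd_on_iff_qform by simp
qed

lemma psd_on_sum:
  assumes "\<And>j. j \<in> J \<Longrightarrow> psd_on T (M j)"
  shows "psd_on T (\<lambda>q p. \<Sum>j\<in>J. M j q p)"
  unfolding psd_on_iff_qform
proof
  fix v
  have "qform T (\<lambda>q p. \<Sum>j\<in>J. M j q p) v = (\<Sum>j\<in>J. qform T (M j) v)"
    unfolding qform_def by (simp add: sum_distrib_left sum_distrib_right)
      (subst sum.swap, rule sum.cong[OF refl], subst sum.swap, simp)
  also have "0 \<le> \<dots>" using assms unfolding psd_on_iff_qform by (simp add: sum_nonneg)
  finally show "0 \<le> qform T (\<lambda>q p. \<Sum>j\<in>J. M j q p) v" .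
qed

lemma psd_on_congruence:
  fixes K :: "'q \<Rightarrow> 's \<Rightarrow> complex"
  assumes "psd_on S X"
  shows "psd_on T (\<lambda>q p. \<Sum>s\<in>S. \<Sum>s'\<in>S. K q s * X s s' * cnj (K p s'))"
  unfolding psd_on_iff_qform
proof
  fix v :: "'q \<Rightarrow> complex"
  define u where "u = (\<lambda>s'. \<Sum>p\<in>T. cnj (K p s') * v p)"
  have cnj_u: "cnj (u s) = (\<Sum>q\<in>T. cnj (v q) * K q s)" for s
    unfolding u_def by (simp add: mult.commute)
  have "qform T (\<lambda>q p. \<Sum>s\<in>S. \<Sum>s'\<in>S. K q s * X s s' * cnj (K p s')) v =
      (\<Sum>q\<in>T. \<Sum>p\<in>T. \<Sum>s\<in>S. \<Sum>s'\<in>S. (cnj (v q) * K q s) * X s s' * (cnj (K p s') * v p))"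
    unfolding qform_def by (simp add: sum_distrib_left sum_distrib_right mult_ac)
  also have "\<dots> = (\<Sum>q\<in>T. \<Sum>s\<in>S. \<Sum>p\<in>T. \<Sum>s'\<in>S. (cnj (v q) * K q s) * X s s' * (cnj (K p s') * v p))"
    by (rule sum.cong[OF refl], rule sum.swap)
  also have "\<dots> = (\<Sum>s\<in>S. \<Sum>q\<in>T. \<Sum>s'\<in>S. \<Sum>p\<in>T. (cnj (v q) * K q s) * X s s' * (cnj (K p s') * v p))"
    by (subst sum.swap) (rule sum.cong[OF refl], rule sum.cong[OF refl], rule sum.swap)
  also have "\<dots> = (\<Sum>s\<in>S. \<Sum>s'\<in>S. \<Sum>q\<in>T. \<Sum>p\<in>T. (cnj (v q) * K q s) * X s s' * (cnj (K p s') * v p))"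
    by (rule sum.cong[OF refl], rule sum.swap)
  also have "\<dots> = qform S X u"
    unfolding qform_def cnj_u unfolding u_def by (simp add: sum_distrib_left sum_distrib_right mult_ac)
  finally show "0 \<le> qform T (\<lambda>q p. \<Sum>s\<in>S. \<Sum>s'\<in>S. K q s * X s s' * cnj (K p s')) v"
    using assms unfolding psd_on_iff_qform by simp
qed


section \<open>Choi matrices\<close>

definition ptrace_fst :: "('b::finite \<times> 'a, 'b \<times> 'a) cmat \<Rightarrow> ('a, 'a) cmat" where
  "ptrace_fst Y = (\<lambda>a' a. \<Sum>b\<in>UNIV. Y (b, a') (b, a))"

lemma mtr_ptrace_fst: "mtr (ptrace_fst Y) = mtr Y"
  unfolding mtr_def ptrace_fst_def sum_UNIV_prod by (rule sum.swap)

lemma ptrace_fst_madd: "ptrace_fst (madd Y Z) = (\<lambda>x y. ptrace_fst Y x y + ptrace_fst Z x y)"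
  unfolding ptrace_fst_def madd_def by (simp add: sum.distrib)

lemma ptrace_fst_mtensor: "ptrace_fst (mtensor M P) = (\<lambda>a' a. mtr M * P a' a)"
  unfolding ptrace_fst_def mtensor_def mtr_def by (simp add: fun_eq_iff sum_distrib_right)

text \<open>The convention, the transpose of the usual Choi matrix
  with the tensor factors swapped, is the one for which \<open>tr (\<eta>\<^sup>T E \<tau>) = tr ((\<eta> \<otimes> \<tau>) Y)\<close>.\<close>
definition choi_channel :: "('b::finite \<times> 'a::finite, 'b \<times> 'a) cmat \<Rightarrow> ('a, 'a) cmat \<Rightarrow> ('b, 'b) cmat" where
  "choi_channel Y X = (\<lambda>b b'. \<Sum>a\<in>UNIV. \<Sum>a'\<in>UNIV. X a a' * Y (b', a') (b, a))"

definition munit :: "'a \<Rightarrow> 'a \<Rightarrow> ('a, 'a) cmat" where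
  "munit a a' = (\<lambda>x y. if x = a \<and> y = a' then 1 else 0)"

definition choi_matrix :: "(('a::finite, 'a) cmat \<Rightarrow> ('b::finite, 'b) cmat) \<Rightarrow> ('b \<times> 'a, 'b \<times> 'a) cmat" where
  "choi_matrix E = (\<lambda>(b', a') (b, a). E (munit a a') b b')"

lemma sum_sum_if_eq:
  fixes f :: "'b::finite \<Rightarrow> 'a::finite \<Rightarrow> 'z::comm_monoid_add"
  shows "(\<Sum>b'\<in>UNIV. \<Sum>a'\<in>UNIV. if b = b' then f b' a' else 0) = (\<Sum>a'\<in>UNIV. f b a')"
proof -
  have "(\<Sum>b'\<in>UNIV. \<Sum>a'\<in>UNIV. if b = b' then f b' a' else 0) =
      (\<Sum>b'\<in>UNIV. if b = b' then (\<Sum>a'\<in>UNIV. f b' a') else 0)"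
    by (rule sum.cong) auto
  then show ?thesis by simp
qed

lemma mtr_mmul_mtensor_mid:
  fixes X :: "('a::finite, 'a) cmat" and Y :: "('b::finite \<times> 'a, 'b \<times> 'a) cmat"
  shows "mtr (mmul (mtensor (mid :: ('b, 'b) cmat) X) Y) = mtr (mmul X (ptrace_fst Y))"
proof -
  have "mtr (mmul (mtensor (mid :: ('b, 'b) cmat) X) Y) =
      (\<Sum>b\<in>UNIV. \<Sum>a\<in>UNIV. \<Sum>b'\<in>UNIV. \<Sum>a'\<in>UNIV. if b = b' then X a a' * Y (b', a') (b, a) else 0)"
    unfolding mtr_def mmul_def mtensor_def mid_def sum_UNIV_prod by (intro sum.cong refl) simp
  also have "\<dots> = (\<Sum>b\<in>UNIV. \<Sum>a\<in>UNIV. \<Sum>a'\<in>UNIV. X a a' * Y (b, a') (b, a))"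
    by (intro sum.cong refl) (rule sum_sum_if_eq)
  also have "\<dots> = mtr (mmul X (ptrace_fst Y))"
    unfolding mtr_def mmul_def ptrace_fst_def sum_distrib_left
    by (subst sum.swap) (intro sum.cong refl, rule sum.swap)
  finally show ?thesis .
qed

lemma mtr_mtransp_choi_channel:
  fixes \<eta> :: "('b::finite, 'b) cmat" and \<tau> :: "('a::finite, 'a) cmat"
  shows "mtr (mmul (mtransp \<eta>) (choi_channel Y \<tau>)) = mtr (mmul (mtensor \<eta> \<tau>) Y)"
proof -
  have "mtr (mmul (mtensor \<eta> \<tau>) Y) =
      (\<Sum>b\<in>UNIV. \<Sum>b'\<in>UNIV. \<Sum>a\<in>UNIV. \<Sum>a'\<in>UNIV. \<eta> b b' * \<tau> a a' * Y (b', a') (b, a))"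
    unfolding mtr_def mmul_def mtensor_def sum_UNIV_prod
    by (simp, intro sum.cong refl, rule sum.swap)
  also have "\<dots> = mtr (mmul (mtransp \<eta>) (choi_channel Y \<tau>))"
    unfolding mtr_def mmul_def mtransp_def choi_channel_def
    by (subst sum.swap) (simp add: sum_distrib_left mult_ac)
  finally show ?thesis by simp
qed

lemma linear_map_choi_channel: "linear_map (choi_channel Y)"
  unfolding linear_map_def choi_channel_def madd_def
  by (simp add: distrib_right sum.distrib sum_distrib_left mult.assoc)

lemma mtr_choi_channel:
  assumes "ptrace_fst Y = mid"
  shows "mtr (choi_channel Y X) = mtr X"
proof -
  have "mtr (choi_channel Y X) = (\<Sum>a\<in>UNIV. \<Sum>a'\<in>UNIV. X a a' * ptrace_fst Y a' a)"
    unfolding mtr_def choi_channel_def ptrace_fst_def sum_distrib_left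
    by (subst sum.swap) (intro sum.cong refl, rule sum.swap)
  also have "\<dots> = mtr X"
    unfolding assms mtr_def mid_def by (simp add: if_distrib[of "\<lambda>x. _ * x"] cong: if_cong)
  finally show ?thesis .
qed

lemma sum_lessThan_times_if_fst_eq:
  fixes f :: "'a::finite \<Rightarrow> complex" and n k :: nat
  assumes "k < n"
  shows "(\<Sum>s\<in>{..<n} \<times> (UNIV :: 'a set). if fst s = k then f (snd s) else 0) = (\<Sum>a\<in>UNIV. f a)"
proof -
  have "(\<Sum>s\<in>{..<n} \<times> (UNIV :: 'a set). if fst s = k then f (snd s) else 0)
     = (\<Sum>k'\<in>{..<n}. \<Sum>a\<in>UNIV. if k' = k then f a else 0)"
    by (simp add: sum.cartesian_product split_def)
  also have "\<dots> = (\<Sum>k'\<in>{..<n}. if k' = k then (\<Sum>a\<in>UNIV. f a) else 0)"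
    by (rule sum.cong) auto
  also have "\<dots> = (\<Sum>a\<in>UNIV. f a)" using assms by (subst sum.delta) auto
  finally show ?thesis .
qed

definition ancilla_kraus :: "('b \<times> 'a \<Rightarrow> complex) \<Rightarrow> nat \<times> 'b \<Rightarrow> nat \<times> 'a \<Rightarrow> complex" where
  "ancilla_kraus w q s = (if fst s = fst q then cnj (w (snd q, snd s)) else 0)"

lemma sum_ancilla_kraus_congruence:
  fixes X :: "(nat \<times> 'a::finite, nat \<times> 'a) cmat"
  assumes kl: "k < n" "l < n"
  shows "(\<Sum>s\<in>{..<n} \<times> UNIV. \<Sum>s'\<in>{..<n} \<times> UNIV.
      ancilla_kraus w (k, b) s * X s s' * cnj (ancilla_kraus w (l, b') s')) =
    (\<Sum>a\<in>UNIV. \<Sum>a'\<in>UNIV. cnj (w (b, a)) * X (k, a) (l, a') * w (b', a'))"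
proof -
  let ?S = "{..<n} \<times> (UNIV :: 'a set)" and ?K = "ancilla_kraus w"
  have "(\<Sum>s'\<in>?S. ?K (k, b) s * X s s' * cnj (?K (l, b') s')) =
      (\<Sum>s'\<in>?S. if fst s' = l then ?K (k, b) s * X s (l, snd s') * w (b', snd s') else 0)" for s
    by (rule sum.cong[OF refl]) (auto simp: ancilla_kraus_def)
  also have "\<dots> s = (\<Sum>a'\<in>UNIV. ?K (k, b) s * X s (l, a') * w (b', a'))" for s
    by (rule sum_lessThan_times_if_fst_eq[OF kl(2)])
  finally have inner: "(\<Sum>s'\<in>?S. ?K (k, b) s * X s s' * cnj (?K (l, b') s')) =
      (\<Sum>a'\<in>UNIV. ?K (k, b) s * X s (l, a') * w (b', a'))" for s .
  have "(\<Sum>s\<in>?S. \<Sum>s'\<in>?S. ?K (k, b) s * X s s' * cnj (?K (l, b') s')) =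
      (\<Sum>s\<in>?S. if fst s = k then
         (\<Sum>a'\<in>UNIV. cnj (w (b, snd s)) * X (k, snd s) (l, a') * w (b', a')) else 0)"
    unfolding inner by (rule sum.cong[OF refl]) (auto simp: ancilla_kraus_def)
  also have "\<dots> = (\<Sum>a\<in>UNIV. \<Sum>a'\<in>UNIV. cnj (w (b, a)) * X (k, a) (l, a') * w (b', a'))"
    by (rule sum_lessThan_times_if_fst_eq[OF kl(1)])
  finally show ?thesis .
qed

text \<open>With \<open>Y = \<Sum>\<^sub>j w\<^sub>j w\<^sub>j\<^sup>*\<close>, the amplified channel is \<open>X \<mapsto> \<Sum>\<^sub>j K\<^sub>j X K\<^sub>j\<^sup>*\<close> with Kraus-type
  operators \<open>K\<^sub>j = ancilla_kraus w\<^sub>j\<close> acting as the identity on the ancilla.\<close>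
lemma completely_positive_choi_channel:
  fixes Y :: "('b::finite \<times> 'a::finite, 'b \<times> 'a) cmat"
  assumes "psd Y"
  shows "completely_positive (choi_channel Y)"
  unfolding completely_positive_def
proof (intro allI impI)
  fix n :: nat and X :: "(nat \<times> 'a, nat \<times> 'a) cmat"
  assume psdX: "psd_on ({..<n} \<times> UNIV) X"
  let ?S = "{..<n} \<times> (UNIV :: 'a set)" and ?T = "{..<n} \<times> (UNIV :: 'b set)"
  obtain w :: "nat \<Rightarrow> 'b \<times> 'a \<Rightarrow> complex" and m where Y: "Y = (\<lambda>x y. \<Sum>j<m. w j x * cnj (w j y))"
    using assms psd_iff_rank_one_sum by blast
  let ?K = "\<lambda>j. ancilla_kraus (w j)"
  have "ampl (choi_channel Y) X q p = (\<Sum>j<m. \<Sum>s\<in>?S. \<Sum>s'\<in>?S. ?K j q s * X s s' * cnj (?K j p s'))"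
    if "q \<in> ?T" "p \<in> ?T" for q p
  proof -
    obtain k b l b' where qp: "q = (k, b)" "p = (l, b')" by (cases q, cases p)
    then have "k < n" "l < n" using that by auto
    moreover have "ampl (choi_channel Y) X q p =
        (\<Sum>a\<in>UNIV. \<Sum>a'\<in>UNIV. \<Sum>j<m. cnj (w j (b, a)) * X (k, a) (l, a') * w j (b', a'))"
      unfolding ampl_def choi_channel_def qp Y by (simp add: sum_distrib_left mult_ac)
    ultimately show ?thesis
      unfolding qp sum_ancilla_kraus_congruence[OF \<open>k < n\<close> \<open>l < n\<close>]
      by (simp only:) (subst sum.swap, intro sum.cong refl, rule sum.swap)
  qed
  moreover have "psd_on ?T (\<lambda>q p. \<Sum>j<m. \<Sum>s\<in>?S. \<Sum>s'\<in>?S. ?K j q s * X s s' * cnj (?K j p s'))"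
    by (intro psd_on_sum psd_on_congruence[OF psdX])
  ultimately show "psd_on ?T (ampl (choi_channel Y) X)"
    unfolding psd_on_def by (simp cong: sum.cong)
qed

lemma linear_map_scale: "linear_map E \<Longrightarrow> E (\<lambda>i j. c * X i j) = (\<lambda>i j. c * E X i j)"
  unfolding linear_map_def by blast

lemma linear_map_zero: "linear_map E \<Longrightarrow> E (\<lambda>i j. 0) = (\<lambda>i j. 0)"
  using linear_map_scale[of E 0] by simp

lemma linear_map_sum:
  assumes "linear_map E" "finite K"
  shows "E (\<lambda>i j. \<Sum>k\<in>K. f k i j) = (\<lambda>i j. \<Sum>k\<in>K. E (f k) i j)"
  using assms(2)
proof (induction K rule: finite_induct)
  case empty
  then show ?case using linear_map_zero[OF assms(1)] by simp
next
  case (insert k K)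
  have "E (\<lambda>i j. \<Sum>k\<in>insert k K. f k i j) = E (madd (f k) (\<lambda>i j. \<Sum>k\<in>K. f k i j))"
    using insert by (simp add: madd_def)
  also have "\<dots> = madd (E (f k)) (E (\<lambda>i j. \<Sum>k\<in>K. f k i j))"
    using assms(1) unfolding linear_map_def by blast
  finally show ?case using insert by (simp add: madd_def)
qed

lemma choi_channel_choi_matrix:
  fixes E :: "('a::finite, 'a) cmat \<Rightarrow> ('b::finite, 'b) cmat"
  assumes lin: "linear_map E"
  shows "choi_channel (choi_matrix E) = E"
proof
  fix X :: "('a, 'a) cmat"
  have X: "X = (\<lambda>i j. \<Sum>p\<in>UNIV. X (fst p) (snd p) * munit (fst p) (snd p) i j)"
  proof (intro ext)
    fix i j
    have "(\<Sum>p\<in>UNIV. X (fst p) (snd p) * munit (fst p) (snd p) i j) =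
        (\<Sum>p\<in>UNIV. if p = (i, j) then X i j else 0)"
      by (rule sum.cong) (auto simp: munit_def)
    then show "X i j = (\<Sum>p\<in>UNIV. X (fst p) (snd p) * munit (fst p) (snd p) i j)"
      by (simp add: sum.delta)
  qed
  have "E X = (\<lambda>i j. \<Sum>p\<in>UNIV. E (\<lambda>i j. X (fst p) (snd p) * munit (fst p) (snd p) i j) i j)"
    by (subst X, rule linear_map_sum[OF lin]) simp
  also have "\<dots> = (\<lambda>i j. \<Sum>p\<in>UNIV. X (fst p) (snd p) * E (munit (fst p) (snd p)) i j)"
    by (subst linear_map_scale[OF lin]) simp
  also have "\<dots> = choi_channel (choi_matrix E) X"
    unfolding choi_channel_def choi_matrix_def sum_UNIV_prod by simp
  finally show "choi_channel (choi_matrix E) X = E X" by simp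
qed

lemma ptrace_fst_choi_matrix:
  assumes "\<forall>X. mtr (E X) = mtr X"
  shows "ptrace_fst (choi_matrix E) = mid"
proof (intro ext)
  fix a' a
  have "ptrace_fst (choi_matrix E) a' a = mtr (munit a a')"
    using assms unfolding ptrace_fst_def choi_matrix_def mtr_def by simp
  also have "\<dots> = mid a' a"
    unfolding mtr_def munit_def mid_def by (cases "a = a'") (auto intro: sum.neutral)
  finally show "ptrace_fst (choi_matrix E) a' a = mid a' a" .
qed

text \<open>Complete positivity applied to the unnormalised maximally entangled state
  \<open>\<Sum>\<^sub>a\<^sub>,\<^sub>a\<^sub>' |f a, a\<rangle>\<langle>f a', a'|\<close> on an ancilla of dimension \<open>|A|\<close>.\<close>
lemma psd_choi_matrix:
  fixes E :: "('a::finite, 'a) cmat \<Rightarrow> ('b::finite, 'b) cmat"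
  assumes "completely_positive E"
  shows "psd (choi_matrix E)"
proof -
  obtain f :: "'a \<Rightarrow> nat" and n where range_f: "range f = {..<n}" and inj: "inj f"
    using finite_imp_inj_to_nat_seg[of "UNIV :: 'a set"] by (auto simp: lessThan_def)
  define u where "u = (\<lambda>q :: nat \<times> 'a. if fst q = f (snd q) then 1 else (0::complex))"
  define X where "X = (\<lambda>p q. u p * cnj (u q))"
  have "psd_on ({..<n} \<times> UNIV) X" unfolding X_def by (rule psd_on_rank_one)
  then have psd_ampl: "psd_on ({..<n} \<times> UNIV) (ampl E X)"
    using assms unfolding completely_positive_def by blast
  define h where "h = (\<lambda>p :: 'b \<times> 'a. (f (snd p), fst p))"
  have inj_h: "inj h" using inj unfolding h_def inj_def by auto
  have range_h: "range h = {..<n} \<times> UNIV"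
  proof
    show "range h \<subseteq> {..<n} \<times> UNIV" using range_f unfolding h_def by auto
    show "{..<n} \<times> UNIV \<subseteq> range h"
    proof
      fix q :: "nat \<times> 'b" assume "q \<in> {..<n} \<times> UNIV"
      then have "fst q \<in> range f" using range_f by auto
      then obtain a where "fst q = f a" by auto
      then have "q = h (snd q, a)" unfolding h_def by (cases q) auto
      then show "q \<in> range h" by blast
    qed
  qed
  have "(\<lambda>c c'. X (f a, c) (f a', c')) = munit a a'" for a a'
    unfolding X_def u_def munit_def using inj by (auto simp: fun_eq_iff inj_eq)
  then have "choi_matrix E = mtransp (\<lambda>p q. ampl E X (h p) (h q))"
    unfolding choi_matrix_def mtransp_def ampl_def h_def by (simp add: fun_eq_iff case_prod_unfold)
  then show ?thesis
    using psd_mtransp[OF psd_reindex[OF inj_h]] psd_ampl range_h by simp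
qed

lemma quantum_channel_choi_channel:
  assumes "psd Y" "ptrace_fst Y = mid"
  shows "quantum_channel (choi_channel Y)"
  unfolding quantum_channel_def
  using linear_map_choi_channel completely_positive_choi_channel[OF assms(1)]
    mtr_choi_channel[OF assms(2)] by blast

lemma quantum_channel_choi_matrix:
  assumes "quantum_channel E"
  shows "psd (choi_matrix E)" "ptrace_fst (choi_matrix E) = mid" "choi_channel (choi_matrix E) = E"
  using assms psd_choi_matrix ptrace_fst_choi_matrix choi_channel_choi_matrix
  unfolding quantum_channel_def by blast+


section \<open>Covariant channels\<close>

definition ptrace_snd :: "('b \<times> 'a::finite, 'b \<times> 'a) cmat \<Rightarrow> ('b, 'b) cmat" where
  "ptrace_snd Z = (\<lambda>b' b. \<Sum>a\<in>UNIV. Z (b', a) (b, a))"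

lemma mmul_mtensor_mid_left_apply:
  "mmul (mtensor A (mid :: ('a::finite, 'a) cmat)) Z (b', a) y = (\<Sum>c\<in>UNIV. A b' c * Z (c, a) y)"
proof -
  have "mmul (mtensor A (mid :: ('a, 'a) cmat)) Z (b', a) y =
      (\<Sum>c\<in>UNIV. \<Sum>d\<in>UNIV. if d = a then A b' c * Z (c, d) y else 0)"
    unfolding mmul_def sum_UNIV_prod mtensor_apply mid_def by (intro sum.cong refl) auto
  then show ?thesis by simp
qed

lemma mmul_mtensor_mid_right_apply:
  "mmul Z (mtensor B (mid :: ('a::finite, 'a) cmat)) x (b, a) = (\<Sum>c\<in>UNIV. Z x (c, a) * B c b)"
proof -
  have "mmul Z (mtensor B (mid :: ('a, 'a) cmat)) x (b, a) =
      (\<Sum>c\<in>UNIV. \<Sum>d\<in>UNIV. if d = a then Z x (c, d) * B c b else 0)"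
    unfolding mmul_def sum_UNIV_prod mtensor_apply mid_def by (intro sum.cong refl) auto
  then show ?thesis by simp
qed

lemma mmul_mid_mtensor_left_apply:
  "mmul (mtensor (mid :: ('b::finite, 'b) cmat) U) Z (b', a) y = (\<Sum>d\<in>UNIV. U a d * Z (b', d) y)"
proof -
  have "mmul (mtensor (mid :: ('b, 'b) cmat) U) Z (b', a) y =
      (\<Sum>c\<in>UNIV. if c = b' then (\<Sum>d\<in>UNIV. U a d * Z (c, d) y) else 0)"
    unfolding mmul_def sum_UNIV_prod mtensor_apply mid_def by (intro sum.cong refl) auto
  then show ?thesis by simp
qed

lemma mmul_mid_mtensor_right_apply:
  "mmul Z (mtensor (mid :: ('b::finite, 'b) cmat) U) x (b, a) = (\<Sum>d\<in>UNIV. Z x (b, d) * U d a)"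
proof -
  have "mmul Z (mtensor (mid :: ('b, 'b) cmat) U) x (b, a) =
      (\<Sum>c\<in>UNIV. if c = b then (\<Sum>d\<in>UNIV. Z x (c, d) * U d a) else 0)"
    unfolding mmul_def sum_UNIV_prod mtensor_apply mid_def by (intro sum.cong refl) auto
  then show ?thesis by simp
qed

lemma ptrace_snd_mmul_left:
  "ptrace_snd (mmul (mtensor A (mid :: ('a::finite, 'a) cmat)) Z) = mmul A (ptrace_snd Z)"
  unfolding ptrace_snd_def mmul_mtensor_mid_left_apply
  by (auto simp: fun_eq_iff mmul_def sum_distrib_left intro: sum.swap)

lemma ptrace_snd_mmul_right:
  "ptrace_snd (mmul Z (mtensor B (mid :: ('a::finite, 'a) cmat))) = mmul (ptrace_snd Z) B"
  unfolding ptrace_snd_def mmul_mtensor_mid_right_apply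
  by (auto simp: fun_eq_iff mmul_def sum_distrib_right intro: sum.swap)

lemma ptrace_snd_mmul_commute:
  "ptrace_snd (mmul (mtensor (mid :: ('b::finite, 'b) cmat) U) Z) =
   ptrace_snd (mmul Z (mtensor (mid :: ('b, 'b) cmat) (U :: ('a::finite, 'a) cmat)))"
  unfolding ptrace_snd_def mmul_mid_mtensor_left_apply mmul_mid_mtensor_right_apply
  by (auto simp: fun_eq_iff mult.commute intro: sum.swap)

lemma ptrace_snd_sandwich_mtensor:
  fixes A :: "('b::finite, 'b) cmat" and U :: "('a::finite, 'a) cmat"
  assumes U: "mmul (madj U) U = mid"
  shows "ptrace_snd (sandwich (mtensor A U) Z) = sandwich A (ptrace_snd Z)"
proof -
  have W: "mtensor A U = mmul (mtensor A mid) (mtensor mid U)"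
    by (simp add: mtensor_mmul)
  have W_adj: "madj (mtensor A U) = mmul (mtensor mid (madj U)) (mtensor (madj A) mid)"
    by (simp add: mtensor_mmul madj_mtensor)
  have "sandwich (mtensor A U) Z =
      mmul (mtensor A mid) (mmul (mmul (mtensor mid U) (mmul Z (mtensor mid (madj U)))) (mtensor (madj A) mid))"
    by (simp only: W_adj, simp only: W mmul_assoc)
  then have "ptrace_snd (sandwich (mtensor A U) Z) =
      sandwich A (ptrace_snd (mmul (mtensor mid U) (mmul Z (mtensor mid (madj U)))))"
    by (simp add: ptrace_snd_mmul_left ptrace_snd_mmul_right, simp add: mmul_assoc)
  also have "ptrace_snd (mmul (mtensor mid U) (mmul Z (mtensor mid (madj U)))) = ptrace_snd Z"
    unfolding ptrace_snd_mmul_commute mmul_assoc mtensor_mmul U by (simp add: mtensor_mid)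
  finally show ?thesis .
qed

lemma ptrace_fst_mmul_left:
  "ptrace_fst (mmul (mtensor (mid :: ('b::finite, 'b) cmat) B) Z) = mmul B (ptrace_fst Z)"
  unfolding ptrace_fst_def mmul_mid_mtensor_left_apply
  by (auto simp: fun_eq_iff mmul_def sum_distrib_left intro: sum.swap)

lemma ptrace_fst_mmul_right:
  "ptrace_fst (mmul Z (mtensor (mid :: ('b::finite, 'b) cmat) B)) = mmul (ptrace_fst Z) B"
  unfolding ptrace_fst_def mmul_mid_mtensor_right_apply
  by (auto simp: fun_eq_iff mmul_def sum_distrib_right intro: sum.swap)

lemma ptrace_fst_mmul_commute:
  "ptrace_fst (mmul (mtensor A (mid :: ('a::finite, 'a) cmat)) Z) =
   ptrace_fst (mmul Z (mtensor (A :: ('b::finite, 'b) cmat) (mid :: ('a, 'a) cmat)))"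
  unfolding ptrace_fst_def mmul_mtensor_mid_left_apply mmul_mtensor_mid_right_apply
  by (auto simp: fun_eq_iff mult.commute intro: sum.swap)

lemma ptrace_fst_sandwich_mtensor:
  fixes A :: "('b::finite, 'b) cmat" and U :: "('a::finite, 'a) cmat"
  assumes A: "mmul (madj A) A = mid"
  shows "ptrace_fst (sandwich (mtensor A U) Y) = sandwich U (ptrace_fst Y)"
proof -
  have W: "mtensor A U = mmul (mtensor mid U) (mtensor A mid)"
    by (simp add: mtensor_mmul)
  have W_adj: "madj (mtensor A U) = mmul (mtensor (madj A) mid) (mtensor mid (madj U))"
    by (simp add: mtensor_mmul madj_mtensor)
  have "sandwich (mtensor A U) Y =
      mmul (mtensor mid U) (mmul (mmul (mtensor A mid) (mmul Y (mtensor (madj A) mid))) (mtensor mid (madj U)))"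
    by (simp only: W_adj, simp only: W mmul_assoc)
  then have "ptrace_fst (sandwich (mtensor A U) Y) =
      sandwich U (ptrace_fst (mmul (mtensor A mid) (mmul Y (mtensor (madj A) mid))))"
    by (simp add: ptrace_fst_mmul_left ptrace_fst_mmul_right, simp add: mmul_assoc)
  also have "ptrace_fst (mmul (mtensor A mid) (mmul Y (mtensor (madj A) mid))) = ptrace_fst Y"
    unfolding ptrace_fst_mmul_commute mmul_assoc mtensor_mmul A by (simp add: mtensor_mid)
  finally show ?thesis .
qed

lemma choi_channel_eq_ptrace_snd: "choi_channel Y X = mtransp (ptrace_snd (mmul Y (mtensor mid X)))"
  unfolding choi_channel_def mtransp_def ptrace_snd_def mmul_mid_mtensor_right_apply
  by (auto simp: fun_eq_iff mult.commute intro: sum.swap)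

lemma choi_channel_sandwich:
  fixes U :: "('a::finite, 'a) cmat" and V :: "('b::finite, 'b) cmat"
  assumes U: "mmul (madj U) U = mid"
  shows "choi_channel (sandwich (mtensor (mconj V) U) Y) (sandwich U X) = sandwich V (choi_channel Y X)"
proof -
  let ?W = "mtensor (mconj V) U"
  have "mmul (madj U) (mmul U (mmul X (madj U))) = mmul X (madj U)"
    by (simp add: mmul_assoc[symmetric] U)
  then have "mmul (madj ?W) (mtensor mid (mmul U (mmul X (madj U)))) = mmul (mtensor mid X) (madj ?W)"
    unfolding madj_mtensor mtensor_mmul by simp
  then have sandwiched: "mmul (sandwich ?W Y) (mtensor mid (sandwich U X)) = sandwich ?W (mmul Y (mtensor mid X))"
    by (simp add: mmul_assoc)
  show ?thesis
    unfolding choi_channel_eq_ptrace_snd sandwiched ptrace_snd_sandwich_mtensor[OF U]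
      mtransp_mmul mtransp_madj_mconj mtransp_mconj
    by (simp add: mmul_assoc)
qed

lemma choi_channel_inject:
  assumes "\<And>X. choi_channel Y X = choi_channel Y' X"
  shows "Y = Y'"
proof (intro ext)
  have munit: "choi_channel Z (munit a a') b b' = Z (b', a') (b, a)" for Z :: "('b::finite \<times> 'a::finite, 'b \<times> 'a) cmat" and a a' b b'
  proof -
    have "choi_channel Z (munit a a') b b' =
        (\<Sum>x\<in>UNIV. if x = a then (\<Sum>y\<in>UNIV. if y = a' then Z (b', y) (b, x) else 0) else 0)"
      unfolding choi_channel_def munit_def
      by (intro sum.cong refl) (auto intro: sum.cong simp: if_distrib[of "\<lambda>x. x * _"] cong: if_cong)
    then show ?thesis by simp
  qed
  fix x y :: "'b \<times> 'a"
  show "Y x y = Y' x y"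
    using munit[of Y "snd y" "snd x" "fst y" "fst x"] munit[of Y' "snd y" "snd x" "fst y" "fst x"] assms
    by (cases x; cases y) simp
qed

definition rep_RA :: "('g \<Rightarrow> ('a::finite, 'a) cmat) \<Rightarrow> ('g \<Rightarrow> ('b::finite, 'b) cmat) \<Rightarrow> 'g
    \<Rightarrow> ('b \<times> 'a, 'b \<times> 'a) cmat" where
  "rep_RA UA UB g = mtensor (mconj (UB g)) (UA g)"

lemma covariant_choi_channel_iff:
  assumes "\<And>g. unitary_mat (UA g)"
  shows "covariant UA UB (choi_channel Y) \<longleftrightarrow> (\<forall>g. sandwich (rep_RA UA UB g) Y = Y)"
proof
  assume inv: "\<forall>g. sandwich (rep_RA UA UB g) Y = Y"
  show "covariant UA UB (choi_channel Y)"
    unfolding covariant_def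
  proof (intro allI)
    fix g X
    have "mmul (madj (UA g)) (UA g) = mid" using assms unfolding unitary_mat_def by blast
    then show "choi_channel Y (sandwich (UA g) X) = sandwich (UB g) (choi_channel Y X)"
      using choi_channel_sandwich inv unfolding rep_RA_def by metis
  qed
next
  assume cov: "covariant UA UB (choi_channel Y)"
  show "\<forall>g. sandwich (rep_RA UA UB g) Y = Y"
  proof (intro allI choi_channel_inject)
    fix g X'
    have U: "mmul (madj (UA g)) (UA g) = mid" "mmul (UA g) (madj (UA g)) = mid"
      using assms unfolding unitary_mat_def by blast+
    define X where "X = sandwich (madj (UA g)) X'"
    have X': "X' = sandwich (UA g) X"
      unfolding X_def mmul_assoc U by (simp add: mmul_assoc[symmetric] U)
    have "choi_channel (sandwich (rep_RA UA UB g) Y) X' = sandwich (UB g) (choi_channel Y X)"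
      unfolding X' rep_RA_def by (rule choi_channel_sandwich[OF U(1)])
    also have "\<dots> = choi_channel Y X'" unfolding X' using cov unfolding covariant_def by simp
    finally show "choi_channel (sandwich (rep_RA UA UB g) Y) X' = choi_channel Y X'" .
  qed
qed


section \<open>Haar integration and twirling\<close>

lemma haar_space: "haar_prob \<mu> \<Longrightarrow> space \<mu> = UNIV"
  unfolding haar_prob_def using sets_eq_imp_space_eq[of \<mu> borel] by simp

lemma haar_finite_measure: "haar_prob \<mu> \<Longrightarrow> finite_measure \<mu>"
  unfolding haar_prob_def by (intro finite_measureI) simp

lemma haar_measure_space: "haar_prob \<mu> \<Longrightarrow> measure \<mu> (space \<mu>) = 1"
  unfolding haar_prob_def measure_def by simp

lemma haar_borel_measurable:
  fixes f :: "'g::topological_group_add \<Rightarrow> 'b::topological_space"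
  assumes "haar_prob \<mu>" "continuous_on UNIV f"
  shows "f \<in> borel_measurable \<mu>"
proof -
  have "sets \<mu> = sets borel" using assms(1) unfolding haar_prob_def by blast
  then have "(borel_measurable \<mu> :: ('g \<Rightarrow> 'b) set) = borel_measurable borel"
    by (rule measurable_cong_sets) simp
  then show ?thesis using borel_measurable_continuous_onI[OF assms(2)] by simp
qed

lemma haar_integrable_continuous:
  fixes f :: "'g::topological_group_add \<Rightarrow> complex"
  assumes "compact (UNIV :: 'g set)" "haar_prob \<mu>" "continuous_on UNIV f"
  shows "integrable \<mu> f"
proof -
  interpret finite_measure \<mu> by (rule haar_finite_measure[OF assms(2)])
  obtain B where "\<forall>x\<in>range f. norm x \<le> B"
    using compact_continuous_image[OF assms(3,1)] compact_imp_bounded bounded_iff by metis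
  then show ?thesis
    by (intro integrable_const_bound[where B = B]) (auto intro: haar_borel_measurable[OF assms(2,3)])
qed

lemma haar_integral_translate:
  fixes f :: "'g::topological_group_add \<Rightarrow> complex"
  assumes haar: "haar_prob \<mu>" and f: "continuous_on UNIV f"
  shows "(\<integral>g. f (g + k) \<partial>\<mu>) = (\<integral>g. f g \<partial>\<mu>)"
proof -
  have sets: "sets \<mu> = sets (borel :: 'g measure)" using haar unfolding haar_prob_def by blast
  have T: "(\<lambda>g. g + k) \<in> measurable \<mu> \<mu>"
    unfolding measurable_cong_sets[OF sets sets]
    by (rule borel_measurable_continuous_onI) (intro continuous_intros)
  have "distr \<mu> \<mu> (\<lambda>g. g + k) = \<mu>"
  proof (rule measure_eqI)
    fix A assume "A \<in> sets (distr \<mu> \<mu> (\<lambda>g. g + k))"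
    then show "emeasure (distr \<mu> \<mu> (\<lambda>g. g + k)) A = emeasure \<mu> A"
      using haar haar_space[OF haar] by (simp add: emeasure_distr[OF T] haar_prob_def)
  qed simp
  then show ?thesis
    using integral_distr[OF T haar_borel_measurable[OF haar f]] by simp
qed

lemma integral_complex_nonneg:
  fixes f :: "'g \<Rightarrow> complex"
  assumes "\<And>g. 0 \<le> f g"
  shows "0 \<le> (\<integral>g. f g \<partial>\<mu>)"
proof -
  have "f = (\<lambda>g. complex_of_real (Re (f g)))"
    using assms by (auto simp: fun_eq_iff complex_nonneg_iff complex_eq_iff)
  then have "(\<integral>g. f g \<partial>\<mu>) = complex_of_real (\<integral>g. Re (f g) \<partial>\<mu>)"
    by (metis integral_complex_of_real)
  moreover have "0 \<le> (\<integral>g. Re (f g) \<partial>\<mu>)"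
    using assms by (intro Bochner_Integration.integral_nonneg) (simp add: complex_nonneg_iff)
  ultimately show ?thesis by (simp add: complex_nonneg_iff)
qed

definition mcontinuous :: "('g::topological_space \<Rightarrow> ('i, 'j) cmat) \<Rightarrow> bool" where
  "mcontinuous F \<longleftrightarrow> (\<forall>x y. continuous_on UNIV (\<lambda>g. F g x y))"

definition mintegral :: "'g measure \<Rightarrow> ('g \<Rightarrow> ('i, 'j) cmat) \<Rightarrow> ('i, 'j) cmat" where
  "mintegral \<mu> F = (\<lambda>x y. \<integral>g. F g x y \<partial>\<mu>)"

lemma mcontinuous_mmul: "mcontinuous F \<Longrightarrow> mcontinuous G \<Longrightarrow> mcontinuous (\<lambda>g. mmul (F g) (G g))"
  unfolding mcontinuous_def mmul_def by (auto intro!: continuous_intros)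

lemma mcontinuous_madj: "mcontinuous F \<Longrightarrow> mcontinuous (\<lambda>g. madj (F g))"
  unfolding mcontinuous_def madj_def by (auto intro!: continuous_intros)

lemma mcontinuous_mconj: "mcontinuous F \<Longrightarrow> mcontinuous (\<lambda>g. mconj (F g))"
  unfolding mcontinuous_def mconj_def by (auto intro!: continuous_intros)

lemma mcontinuous_const: "mcontinuous (\<lambda>g. M)"
  unfolding mcontinuous_def by auto

lemma mcontinuous_mtensor: "mcontinuous F \<Longrightarrow> mcontinuous G \<Longrightarrow> mcontinuous (\<lambda>g. mtensor (F g) (G g))"
  unfolding mcontinuous_def mtensor_def by (auto simp: case_prod_unfold intro!: continuous_intros)

lemma mcontinuous_compose:
  assumes "mcontinuous F" "continuous_on UNIV h"
  shows "mcontinuous (\<lambda>g. F (h g))"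
  unfolding mcontinuous_def
proof (intro allI)
  fix x y
  have "continuous_on UNIV (\<lambda>g. F g x y)" using assms(1) unfolding mcontinuous_def by blast
  then show "continuous_on UNIV (\<lambda>g. F (h g) x y)"
    using continuous_on_compose2[OF _ assms(2)] by blast
qed

lemma mcontinuous_sandwich:
  "mcontinuous W \<Longrightarrow> mcontinuous (\<lambda>g. sandwich (W g) M)"
  by (intro mcontinuous_mmul mcontinuous_madj mcontinuous_const)

context
  fixes \<mu> :: "'g::topological_group_add measure"
  assumes compact: "compact (UNIV :: 'g set)" and haar: "haar_prob \<mu>"
begin

lemma mcontinuous_integrable: "mcontinuous F \<Longrightarrow> integrable \<mu> (\<lambda>g. F g x y)"
  unfolding mcontinuous_def using haar_integrable_continuous[OF compact haar] by blast

lemma mmul_mintegral_left: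
  "mcontinuous F \<Longrightarrow> mmul A (mintegral \<mu> F) = mintegral \<mu> (\<lambda>g. mmul A (F g))"
  unfolding mintegral_def mmul_def
  by (auto simp: fun_eq_iff Bochner_Integration.integral_sum mcontinuous_integrable)

lemma mmul_mintegral_right:
  "mcontinuous F \<Longrightarrow> mmul (mintegral \<mu> F) A = mintegral \<mu> (\<lambda>g. mmul (F g) A)"
  unfolding mintegral_def mmul_def
  by (auto simp: fun_eq_iff Bochner_Integration.integral_sum mcontinuous_integrable)

lemma mtr_mintegral: "mcontinuous F \<Longrightarrow> mtr (mintegral \<mu> F) = (\<integral>g. mtr (F g) \<partial>\<mu>)"
  unfolding mintegral_def mtr_def
  by (simp add: Bochner_Integration.integral_sum mcontinuous_integrable)

lemma ptrace_fst_mintegral: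
  "mcontinuous F \<Longrightarrow> ptrace_fst (mintegral \<mu> F) = mintegral \<mu> (\<lambda>g. ptrace_fst (F g))"
  unfolding mintegral_def ptrace_fst_def
  by (simp add: fun_eq_iff Bochner_Integration.integral_sum mcontinuous_integrable)

lemma mintegral_const: "mintegral \<mu> (\<lambda>g. M) = M"
  using haar_measure_space[OF haar] unfolding mintegral_def by simp

lemma mintegral_translate: "mcontinuous F \<Longrightarrow> mintegral \<mu> (\<lambda>g. F (g + k)) = mintegral \<mu> F"
  unfolding mintegral_def mcontinuous_def
  using haar_integral_translate[OF haar] by (auto simp: fun_eq_iff)

lemma psd_mintegral:
  fixes F :: "'g \<Rightarrow> ('i::finite, 'i) cmat"
  assumes "mcontinuous F" "\<And>g. psd (F g)"
  shows "psd (mintegral \<mu> F)"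
  unfolding psd_iff_qform
proof
  fix v :: "'i \<Rightarrow> complex"
  have "qform UNIV (mintegral \<mu> F) v = (\<integral>g. qform UNIV (F g) v \<partial>\<mu>)"
    unfolding qform_def mintegral_def
    by (simp add: Bochner_Integration.integral_sum mcontinuous_integrable[OF assms(1)])
  also have "0 \<le> \<dots>"
    using assms(2) unfolding psd_iff_qform by (intro integral_complex_nonneg) blast
  finally show "0 \<le> qform UNIV (mintegral \<mu> F) v" .
qed

end

lemma rep_zero:
  assumes "cont_unitary_rep U"
  shows "U 0 = mid"
proof -
  have "mmul (madj (U 0)) (U 0) = mid" "U 0 = mmul (U 0) (U 0)"
    using assms unfolding cont_unitary_rep_def unitary_mat_def by (metis add_0)+
  then have "mid = mmul (madj (U 0)) (mmul (U 0) (U 0))" by simp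
  also have "\<dots> = U 0" unfolding mmul_assoc[symmetric] \<open>mmul (madj (U 0)) (U 0) = mid\<close> by simp
  finally show ?thesis by simp
qed

lemma rep_minus:
  assumes "cont_unitary_rep U"
  shows "U (- g) = madj (U g)"
proof -
  have U: "mmul (U g) (madj (U g)) = mid" "U (- g + g) = mmul (U (- g)) (U g)"
    using assms unfolding cont_unitary_rep_def unitary_mat_def by blast+
  have "madj (U g) = mmul (U (- g + g)) (madj (U g))" using rep_zero[OF assms] by simp
  also have "\<dots> = U (- g)" unfolding U(2) mmul_assoc U(1) by simp
  finally show ?thesis by simp
qed

lemma rep_RA_add:
  assumes "cont_unitary_rep UA" "cont_unitary_rep UB"
  shows "rep_RA UA UB (g + h) = mmul (rep_RA UA UB g) (rep_RA UA UB h)"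
  using assms unfolding rep_RA_def cont_unitary_rep_def by (simp add: mtensor_mmul mconj_mmul)

lemma rep_RA_minus:
  assumes "cont_unitary_rep UA" "cont_unitary_rep UB"
  shows "rep_RA UA UB (- g) = madj (rep_RA UA UB g)"
  unfolding rep_RA_def rep_minus[OF assms(1)] rep_minus[OF assms(2)] madj_mtensor madj_mconj ..

lemma mcontinuous_rep_RA:
  assumes "cont_unitary_rep UA" "cont_unitary_rep UB"
  shows "mcontinuous (rep_RA UA UB)"
  using assms unfolding rep_RA_def cont_unitary_rep_def
  by (intro mcontinuous_mtensor mcontinuous_mconj) (simp_all add: mcontinuous_def)

lemma twirl_eq_mintegral: "twirl \<mu> UA UB M = mintegral \<mu> (\<lambda>g. sandwich (rep_RA UA UB g) M)"
  unfolding twirl_def mintegral_def rep_RA_def ..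

definition twirl_adjoint :: "'g::uminus measure \<Rightarrow> ('g \<Rightarrow> ('a::finite, 'a) cmat) \<Rightarrow> ('g \<Rightarrow> ('b::finite, 'b) cmat)
    \<Rightarrow> ('b \<times> 'a, 'b \<times> 'a) cmat \<Rightarrow> ('b \<times> 'a, 'b \<times> 'a) cmat" where
  "twirl_adjoint \<mu> UA UB Y = mintegral \<mu> (\<lambda>g. sandwich (rep_RA UA UB (- g)) Y)"

context
  fixes \<mu> :: "'g::topological_group_add measure"
    and UA :: "'g \<Rightarrow> ('a::finite, 'a) cmat"
    and UB :: "'g \<Rightarrow> ('b::finite, 'b) cmat"
  assumes compact: "compact (UNIV :: 'g set)" and haar: "haar_prob \<mu>"
    and UA: "cont_unitary_rep UA" and UB: "cont_unitary_rep UB"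
begin

lemma mcontinuous_sandwich_rep_RA: "mcontinuous (\<lambda>g. sandwich (rep_RA UA UB g) M)"
  by (intro mcontinuous_sandwich mcontinuous_rep_RA[OF UA UB])

lemma mcontinuous_sandwich_rep_RA_minus: "mcontinuous (\<lambda>g. sandwich (rep_RA UA UB (- g)) M)"
  by (intro mcontinuous_sandwich mcontinuous_compose[OF mcontinuous_rep_RA[OF UA UB]] continuous_intros)

lemma psd_twirl: "psd \<sigma> \<Longrightarrow> psd (twirl \<mu> UA UB \<sigma>)"
  unfolding twirl_eq_mintegral
  by (intro psd_mintegral[OF compact haar] mcontinuous_sandwich_rep_RA psd_sandwich)

lemma mtr_mmul_twirl_invariant:
  assumes inv: "\<And>g. sandwich (rep_RA UA UB g) Y = Y"
  shows "mtr (mmul (twirl \<mu> UA UB \<sigma>) Y) = mtr (mmul \<sigma> Y)"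
proof -
  have "mtr (mmul (twirl \<mu> UA UB \<sigma>) Y) = (\<integral>g. mtr (mmul (sandwich (rep_RA UA UB g) \<sigma>) Y) \<partial>\<mu>)"
    unfolding twirl_eq_mintegral mmul_mintegral_right[OF compact haar mcontinuous_sandwich_rep_RA]
    by (intro mtr_mintegral[OF compact haar] mcontinuous_mmul mcontinuous_sandwich_rep_RA mcontinuous_const)
  also have "\<dots> = (\<integral>g. mtr (mmul \<sigma> Y) \<partial>\<mu>)"
  proof (rule Bochner_Integration.integral_cong[OF refl])
    fix g
    let ?W = "rep_RA UA UB g"
    have "sandwich (madj ?W) Y = Y"
      using inv[of "- g"] unfolding rep_RA_minus[OF UA UB] by simp
    moreover have "mtr (mmul (sandwich ?W \<sigma>) Y) = mtr (mmul \<sigma> (sandwich (madj ?W) Y))"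
      by (simp add: mmul_assoc) (subst mtr_mmul_commute, simp add: mmul_assoc)
    ultimately show "mtr (mmul (sandwich ?W \<sigma>) Y) = mtr (mmul \<sigma> Y)" by simp
  qed
  also have "\<dots> = mtr (mmul \<sigma> Y)"
    using haar_measure_space[OF haar] by simp
  finally show ?thesis .
qed

lemma psd_twirl_adjoint: "psd Y \<Longrightarrow> psd (twirl_adjoint \<mu> UA UB Y)"
  unfolding twirl_adjoint_def
  by (intro psd_mintegral[OF compact haar] mcontinuous_sandwich_rep_RA_minus psd_sandwich)

lemma ptrace_fst_twirl_adjoint:
  assumes "ptrace_fst Y = mid"
  shows "ptrace_fst (twirl_adjoint \<mu> UA UB Y) = mid"
proof -
  have "ptrace_fst (sandwich (rep_RA UA UB (- g)) Y) = mid" for g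
  proof -
    have "mmul (madj (mconj (UB (- g)))) (mconj (UB (- g))) = mid"
      using unitary_mconj UB unfolding cont_unitary_rep_def unitary_mat_def by blast
    moreover have "mmul (UA (- g)) (madj (UA (- g))) = mid"
      using UA unfolding cont_unitary_rep_def unitary_mat_def by blast
    ultimately show ?thesis
      unfolding rep_RA_def by (simp add: ptrace_fst_sandwich_mtensor assms)
  qed
  then show ?thesis
    unfolding twirl_adjoint_def ptrace_fst_mintegral[OF compact haar mcontinuous_sandwich_rep_RA_minus]
    by (simp add: mintegral_const[OF compact haar])
qed

lemma mtr_mmul_twirl_adjoint:
  "mtr (mmul \<sigma> (twirl_adjoint \<mu> UA UB Y)) = mtr (mmul (twirl \<mu> UA UB \<sigma>) Y)"
proof -
  have "mtr (mmul \<sigma> (twirl_adjoint \<mu> UA UB Y)) = (\<integral>g. mtr (mmul \<sigma> (sandwich (rep_RA UA UB (- g)) Y)) \<partial>\<mu>)"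
    unfolding twirl_adjoint_def mmul_mintegral_left[OF compact haar mcontinuous_sandwich_rep_RA_minus]
    by (intro mtr_mintegral[OF compact haar] mcontinuous_mmul mcontinuous_sandwich_rep_RA_minus mcontinuous_const)
  also have "\<dots> = (\<integral>g. mtr (mmul (sandwich (rep_RA UA UB g) \<sigma>) Y) \<partial>\<mu>)"
  proof (rule Bochner_Integration.integral_cong[OF refl])
    fix g
    show "mtr (mmul \<sigma> (sandwich (rep_RA UA UB (- g)) Y)) = mtr (mmul (sandwich (rep_RA UA UB g) \<sigma>) Y)"
      unfolding rep_RA_minus[OF UA UB] madj_madj
      by (simp add: mmul_assoc) (subst mtr_mmul_commute, simp add: mmul_assoc)
  qed
  also have "\<dots> = mtr (mmul (twirl \<mu> UA UB \<sigma>) Y)"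
    unfolding twirl_eq_mintegral mmul_mintegral_right[OF compact haar mcontinuous_sandwich_rep_RA]
    by (intro mtr_mintegral[OF compact haar, symmetric] mcontinuous_mmul mcontinuous_sandwich_rep_RA
        mcontinuous_const)
  finally show ?thesis .
qed

text \<open>Right invariance of the Haar measure, applied to \<open>g \<mapsto> g + h\<close>.\<close>
lemma sandwich_twirl_adjoint:
  "sandwich (rep_RA UA UB h) (twirl_adjoint \<mu> UA UB Y) = twirl_adjoint \<mu> UA UB Y"
proof -
  define F where "F = (\<lambda>g. sandwich (rep_RA UA UB g) Y)"
  have F: "mcontinuous F" unfolding F_def by (rule mcontinuous_sandwich_rep_RA)
  have F_compose: "mcontinuous (\<lambda>g. F (h + - g))" "mcontinuous (\<lambda>g. F (- g))"
    by (intro mcontinuous_compose[OF F] continuous_intros)+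
  have adj: "twirl_adjoint \<mu> UA UB Y = mintegral \<mu> (\<lambda>g. F (- g))"
    unfolding twirl_adjoint_def F_def ..
  have "sandwich (rep_RA UA UB h) (twirl_adjoint \<mu> UA UB Y) =
      mintegral \<mu> (\<lambda>g. sandwich (rep_RA UA UB h) (F (- g)))"
    unfolding adj mmul_mintegral_left[OF compact haar F_compose(2)]
    by (intro mmul_mintegral_right[OF compact haar] mcontinuous_mmul mcontinuous_const F_compose)
  also have "\<dots> = mintegral \<mu> (\<lambda>g. F (h + - g))"
    unfolding F_def rep_RA_add[OF UA UB] madj_mmul by (simp add: mmul_assoc)
  also have "\<dots> = mintegral \<mu> (\<lambda>g. F (h + - (g + h)))"
    using mintegral_translate[OF compact haar F_compose(1), of h] by simp
  also have "\<dots> = mintegral \<mu> (\<lambda>g. F (- g))"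
  proof -
    have "h + - (g + h) = - g" for g
      by (simp only: minus_add add.assoc[symmetric] add.right_inverse add_0_left)
    then show ?thesis by simp
  qed
  finally show ?thesis unfolding adj .
qed

end


section \<open>Semidefinite programming duality\<close>

definition primal_feasible :: "('b::finite \<times> 'a::finite, 'b \<times> 'a) cmat \<Rightarrow> ('a, 'a) cmat \<Rightarrow> bool" where
  "primal_feasible \<rho> X \<longleftrightarrow> psd X \<and> psd (msub (mtensor (mid :: ('b, 'b) cmat) X) \<rho>)"

definition primal_value :: "('b::finite \<times> 'a::finite, 'b \<times> 'a) cmat \<Rightarrow> real" where
  "primal_value \<rho> = Inf {Re (mtr X) | X. primal_feasible \<rho> X}"

definition dual_feasible :: "('b::finite \<times> 'a::finite, 'b \<times> 'a) cmat \<Rightarrow> bool" where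
  "dual_feasible Y \<longleftrightarrow> psd Y \<and> ptrace_fst Y = mid"

lemma sdp_weak_duality:
  assumes "primal_feasible \<rho> X" "dual_feasible Y"
  shows "Re (mtr (mmul \<rho> Y)) \<le> Re (mtr X)"
proof -
  have "0 \<le> mtr (mmul (msub (mtensor mid X) \<rho>) Y)"
    using assms unfolding primal_feasible_def dual_feasible_def by (intro mtr_mmul_psd_nonneg) auto
  also have "\<dots> = mtr X - mtr (mmul \<rho> Y)"
    using assms(2) unfolding mtr_mmul_msub mtr_mmul_mtensor_mid dual_feasible_def by simp
  finally show ?thesis by (simp add: complex_nonneg_iff)
qed

lemma Re_qform_le:
  fixes M :: "('i::finite, 'i) cmat"
  shows "Re (qform UNIV M v) \<le> (\<Sum>x\<in>UNIV. \<Sum>y\<in>UNIV. cmod (M x y)) * (\<Sum>z\<in>UNIV. (cmod (v z))\<^sup>2)"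
proof -
  define N where "N = (\<Sum>z\<in>UNIV. (cmod (v z))\<^sup>2)"
  have vN: "(cmod (v x))\<^sup>2 \<le> N" for x
    unfolding N_def by (rule member_le_sum) auto
  have vv: "cmod (v x) * cmod (v y) \<le> N" for x y
  proof -
    have "2 * (cmod (v x) * cmod (v y)) \<le> (cmod (v x))\<^sup>2 + (cmod (v y))\<^sup>2"
      using sum_squares_bound[of "cmod (v x)" "cmod (v y)"] by (simp add: power2_eq_square algebra_simps)
    then show ?thesis using vN[of x] vN[of y] by linarith
  qed
  have "Re (qform UNIV M v) \<le> cmod (qform UNIV M v)" by (rule complex_Re_le_cmod)
  also have "\<dots> \<le> (\<Sum>x\<in>UNIV. \<Sum>y\<in>UNIV. cmod (cnj (v x) * M x y * v y))"
    unfolding qform_def by (rule order_trans[OF norm_sum sum_mono]) (rule norm_sum)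
  also have "\<dots> \<le> (\<Sum>x\<in>UNIV. \<Sum>y\<in>UNIV. cmod (M x y) * N)"
  proof (intro sum_mono)
    fix x y
    have "cmod (cnj (v x) * M x y * v y) = cmod (M x y) * (cmod (v x) * cmod (v y))"
      by (simp add: norm_mult)
    also have "\<dots> \<le> cmod (M x y) * N" by (rule mult_left_mono[OF vv]) simp
    finally show "cmod (cnj (v x) * M x y * v y) \<le> cmod (M x y) * N" .
  qed
  also have "\<dots> = (\<Sum>x\<in>UNIV. \<Sum>y\<in>UNIV. cmod (M x y)) * N" by (simp add: sum_distrib_right)
  finally show ?thesis unfolding N_def .
qed

lemma primal_feasible_exists:
  fixes \<rho> :: "('b::finite \<times> 'a::finite, 'b \<times> 'a) cmat"
  assumes "psd \<rho>"
  shows "\<exists>X. primal_feasible \<rho> X"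
proof -
  define c where "c = (\<Sum>x\<in>UNIV. \<Sum>y\<in>UNIV. cmod (\<rho> x y))"
  define X where "X = (\<lambda>x y. complex_of_real c * (mid :: ('a, 'a) cmat) x y)"
  have "psd X" unfolding X_def c_def by (intro psd_scale psd_mid sum_nonneg) auto
  moreover have "psd (msub (mtensor (mid :: ('b, 'b) cmat) X) \<rho>)"
    unfolding psd_iff_qform
  proof
    fix v :: "'b \<times> 'a \<Rightarrow> complex"
    have "qform UNIV (msub (mtensor (mid :: ('b, 'b) cmat) X) \<rho>) v =
        complex_of_real c * qform UNIV mid v - qform UNIV \<rho> v"
      unfolding X_def mtensor_scale mtensor_mid msub_def qform_def
      by (simp add: algebra_simps sum_subtractf sum_distrib_left)
    moreover have "0 \<le> qform UNIV \<rho> v" using assms unfolding psd_iff_qform by blast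
    moreover have "Re (qform UNIV \<rho> v) \<le> c * (\<Sum>z\<in>UNIV. (cmod (v z))\<^sup>2)"
      unfolding c_def by (rule Re_qform_le)
    ultimately show "0 \<le> qform UNIV (msub (mtensor (mid :: ('b, 'b) cmat) X) \<rho>) v"
      unfolding qform_mid by (simp add: complex_nonneg_iff)
  qed
  ultimately show ?thesis unfolding primal_feasible_def by blast
qed

lemma primal_value_le:
  assumes "primal_feasible \<rho> X"
  shows "primal_value \<rho> \<le> Re (mtr X)"
  unfolding primal_value_def using assms
  by (intro cInf_lower) (auto simp: bdd_below_def primal_feasible_def intro: mtr_psd_nonneg)

lemma dual_le_primal_value:
  assumes "psd \<rho>" "dual_feasible Y"
  shows "Re (mtr (mmul \<rho> Y)) \<le> primal_value \<rho>"
  unfolding primal_value_def using primal_feasible_exists[OF assms(1)] sdp_weak_duality[OF _ assms(2)]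
  by (intro cInf_greatest) auto

text \<open>For strong duality, matrices are encoded as vectors of the Euclidean space
  \<open>complex ^ ('i \<times> 'j)\<close>, whose inner product is \<open>minner\<close>, so that the separating hyperplane
  theorem applies.\<close>

definition mat_of_vec :: "complex ^ ('i::finite \<times> 'j::finite) \<Rightarrow> ('i, 'j) cmat" where
  "mat_of_vec v = (\<lambda>x y. v $ (x, y))"

definition vec_of_mat :: "('i::finite, 'j::finite) cmat \<Rightarrow> complex ^ ('i \<times> 'j)" where
  "vec_of_mat M = (\<chi> p. M (fst p) (snd p))"

definition minner :: "('i::finite, 'j::finite) cmat \<Rightarrow> ('i, 'j) cmat \<Rightarrow> real" where
  "minner A Q = (\<Sum>x\<in>UNIV. \<Sum>y\<in>UNIV. Re (cnj (A x y) * Q x y))"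

definition hpart :: "('i, 'i) cmat \<Rightarrow> ('i, 'i) cmat" where
  "hpart A = (\<lambda>x y. (A x y + cnj (A y x)) / 2)"

lemma mat_of_vec_vec_of_mat [simp]: "mat_of_vec (vec_of_mat M) = M"
  unfolding mat_of_vec_def vec_of_mat_def by simp

lemma mat_of_vec_eq_zero_iff: "mat_of_vec v = (\<lambda>x y. 0) \<longleftrightarrow> v = 0"
  unfolding mat_of_vec_def by (auto simp: vec_eq_iff fun_eq_iff)

lemma inner_eq_minner: "inner u v = minner (mat_of_vec u) (mat_of_vec v)"
  unfolding inner_vec_def minner_def mat_of_vec_def sum_UNIV_prod by (simp add: inner_complex_def)

lemma minner_diff: "minner A (\<lambda>x y. P x y - Q x y) = minner A P - minner A Q"
  unfolding minner_def by (simp add: right_diff_distrib sum_subtractf)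

lemma minner_scale: "minner A (\<lambda>x y. complex_of_real t * Q x y) = t * minner A Q"
  unfolding minner_def by (simp add: sum_distrib_left mult.left_commute)

lemma minner_zero: "minner A (\<lambda>x y. 0) = 0"
  unfolding minner_def by simp

lemma minner_self_eq_zero:
  assumes "minner A A \<le> 0"
  shows "A = (\<lambda>x y. 0)"
proof -
  have nonneg: "0 \<le> (Re (A x y))\<^sup>2 + (Im (A x y))\<^sup>2" for x y by simp
  have eq: "minner A A = (\<Sum>x\<in>UNIV. \<Sum>y\<in>UNIV. (Re (A x y))\<^sup>2 + (Im (A x y))\<^sup>2)"
    unfolding minner_def by (intro sum.cong refl) (simp add: power2_eq_square)
  have "(\<Sum>x\<in>UNIV. \<Sum>y\<in>UNIV. (Re (A x y))\<^sup>2 + (Im (A x y))\<^sup>2) = 0"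
    using assms unfolding eq by (meson antisym sum_nonneg nonneg)
  then have "\<forall>x\<in>UNIV. (\<Sum>y\<in>UNIV. (Re (A x y))\<^sup>2 + (Im (A x y))\<^sup>2) = 0"
    by (subst sum_nonneg_eq_0_iff[symmetric]) (auto intro: sum_nonneg)
  then have "\<forall>x y. (Re (A x y))\<^sup>2 + (Im (A x y))\<^sup>2 = 0"
    by (subst (asm) sum_nonneg_eq_0_iff) auto
  then show ?thesis by (auto simp: fun_eq_iff complex_eq_iff add_nonneg_eq_0_iff)
qed

lemma hpart_hermitian:
  assumes "\<And>x y. Q y x = cnj (Q x y)"
  shows "hpart Q = Q"
proof (intro ext)
  fix x y
  have "cnj (Q y x) = Q x y" using assms[of x y] by simp
  then show "hpart Q x y = Q x y" unfolding hpart_def by (simp add: field_simps)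
qed

lemma hpart_mat_of_vec_combination:
  "hpart (mat_of_vec (u *\<^sub>R v + u' *\<^sub>R v')) =
    (\<lambda>i j. complex_of_real u * hpart (mat_of_vec v) i j + complex_of_real u' * hpart (mat_of_vec v') i j)"
proof -
  have "mat_of_vec (u *\<^sub>R v + u' *\<^sub>R v') =
      (\<lambda>i j. complex_of_real u * mat_of_vec v i j + complex_of_real u' * mat_of_vec v' i j)"
    unfolding mat_of_vec_def vector_add_component vector_scaleR_component by (simp add: scaleR_conv_of_real)
  then show ?thesis unfolding hpart_def by (simp add: fun_eq_iff add_divide_distrib algebra_simps)
qed

lemma hpart_scale: "hpart (\<lambda>x y. complex_of_real t * Q x y) = (\<lambda>x y. complex_of_real t * hpart Q x y)"
  unfolding hpart_def by (intro ext) (simp add: distrib_left)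

lemma hpart_zero: "hpart (\<lambda>x y. 0) = (\<lambda>x y. 0)"
  unfolding hpart_def by simp

lemma qform_hpart: "qform UNIV (hpart A) w = complex_of_real (Re (qform UNIV A w))"
proof -
  have "qform UNIV (\<lambda>x y. cnj (A y x)) w = cnj (qform UNIV A w)"
    unfolding qform_def cnj_sum by (subst sum.swap) (simp add: mult_ac)
  moreover have "qform UNIV (hpart A) w = (qform UNIV A w + qform UNIV (\<lambda>x y. cnj (A y x)) w) / 2"
    unfolding qform_def hpart_def
    by (simp add: sum_divide_distrib[symmetric] sum.distrib algebra_simps add_divide_distrib)
  ultimately show ?thesis by (simp add: complex_add_cnj)
qed

lemma ptrace_fst_hpart: "ptrace_fst (hpart A) = hpart (ptrace_fst A)"
  unfolding ptrace_fst_def hpart_def by (simp add: fun_eq_iff sum_divide_distrib[symmetric] sum.distrib)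

lemma minner_rank_one: "minner A (\<lambda>x y. w x * cnj (w y)) = Re (qform UNIV A w)"
proof -
  have "minner A (\<lambda>x y. w x * cnj (w y)) = Re (\<Sum>x\<in>UNIV. \<Sum>y\<in>UNIV. cnj (cnj (w x) * A x y * w y))"
    unfolding minner_def Re_sum by (intro sum.cong refl) (simp add: mult_ac)
  then show ?thesis unfolding qform_def cnj_sum[symmetric] by (simp only: cnj.sel)
qed

lemma minner_mtensor_mid_rank_one:
  fixes A :: "('b::finite \<times> 'a::finite, 'b \<times> 'a) cmat"
  shows "minner A (mtensor (mid :: ('b, 'b) cmat) (\<lambda>x y. w x * cnj (w y))) = Re (qform UNIV (ptrace_fst A) w)"
proof -
  have "minner A (mtensor (mid :: ('b, 'b) cmat) (\<lambda>x y. w x * cnj (w y))) =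
      (\<Sum>b\<in>UNIV. \<Sum>a\<in>UNIV. \<Sum>b'\<in>UNIV. \<Sum>a'\<in>UNIV.
        if b = b' then Re (cnj (A (b', a) (b', a')) * (w a * cnj (w a'))) else 0)"
    unfolding minner_def sum_UNIV_prod mtensor_apply mid_def by (intro sum.cong refl) auto
  also have "\<dots> = (\<Sum>b\<in>UNIV. \<Sum>a\<in>UNIV. \<Sum>a'\<in>UNIV. Re (cnj (A (b, a) (b, a')) * (w a * cnj (w a'))))"
    by (intro sum.cong refl) (rule sum_sum_if_eq)
  also have "\<dots> = (\<Sum>a\<in>UNIV. \<Sum>a'\<in>UNIV. \<Sum>b\<in>UNIV. Re (cnj (A (b, a) (b, a')) * (w a * cnj (w a'))))"
    by (subst sum.swap) (rule sum.cong[OF refl], rule sum.swap)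
  also have "\<dots> = (\<Sum>a\<in>UNIV. \<Sum>a'\<in>UNIV. \<Sum>b\<in>UNIV. Re (cnj (w a) * A (b, a) (b, a') * w a'))"
  proof -
    have swap: "Re (cnj p * (q * cnj r)) = Re (cnj q * p * r)" for p q r
    proof -
      have "cnj p * (q * cnj r) = cnj (cnj q * p * r)" by simp
      then show ?thesis by (simp only: cnj.sel)
    qed
    show ?thesis unfolding swap ..
  qed
  also have "\<dots> = Re (qform UNIV (ptrace_fst A) w)"
    unfolding qform_def ptrace_fst_def Re_sum
    by (intro sum.cong refl) (simp add: sum_distrib_left sum_distrib_right)
  finally show ?thesis .
qed

lemma Re_mtr_mmul_hpart:
  assumes herm: "\<And>x y. \<rho> y x = cnj (\<rho> x y)"
  shows "Re (mtr (mmul \<rho> (hpart A))) = minner A \<rho>"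
proof -
  have "Re (mtr (mmul \<rho> (hpart A))) =
      (\<Sum>x\<in>UNIV. \<Sum>y\<in>UNIV. (Re (\<rho> x y * A y x) + Re (\<rho> x y * cnj (A x y))) / 2)"
    unfolding mtr_def mmul_def hpart_def Re_sum by (intro sum.cong refl) (simp add: algebra_simps)
  also have "\<dots> = ((\<Sum>x\<in>UNIV. \<Sum>y\<in>UNIV. Re (\<rho> x y * A y x)) +
      (\<Sum>x\<in>UNIV. \<Sum>y\<in>UNIV. Re (\<rho> x y * cnj (A x y)))) / 2"
    by (simp add: sum.distrib sum_divide_distrib[symmetric])
  also have "(\<Sum>x\<in>UNIV. \<Sum>y\<in>UNIV. Re (\<rho> x y * A y x)) = (\<Sum>y\<in>UNIV. \<Sum>x\<in>UNIV. Re (\<rho> x y * A y x))"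
    by (rule sum.swap)
  also have "\<dots> = (\<Sum>y\<in>UNIV. \<Sum>x\<in>UNIV. Re (\<rho> y x * cnj (A y x)))"
  proof (intro sum.cong refl)
    fix y x
    have "\<rho> x y * A y x = cnj (\<rho> y x * cnj (A y x))" using herm[of y x] by simp
    then show "Re (\<rho> x y * A y x) = Re (\<rho> y x * cnj (A y x))" by (simp only: cnj.sel)
  qed
  finally show ?thesis unfolding minner_def by (simp add: mult.commute)
qed

definition psd_cone_below :: "real \<Rightarrow> ((complex ^ ('i::finite \<times> 'i)) \<times> real) set" where
  "psd_cone_below p = {z. psd (hpart (mat_of_vec (fst z))) \<and> snd z \<le> p}"

definition primal_epigraph ::
    "('b::finite \<times> 'a::finite, 'b \<times> 'a) cmat \<Rightarrow> ((complex ^ (('b \<times> 'a) \<times> ('b \<times> 'a))) \<times> real) set" where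
  "primal_epigraph \<rho> = {z. \<exists>X. psd X \<and> Re (mtr X) < snd z \<and>
     psd (msub (msub (mtensor (mid :: ('b, 'b) cmat) X) \<rho>) (hpart (mat_of_vec (fst z))))}"

lemma convex_psd_cone_below: "convex (psd_cone_below p :: ((complex ^ ('i::finite \<times> 'i)) \<times> real) set)"
  unfolding convex_def psd_cone_below_def
proof (intro ballI allI impI)
  fix x y :: "(complex ^ ('i \<times> 'i)) \<times> real" and u v :: real
  assume "x \<in> {z. psd (hpart (mat_of_vec (fst z))) \<and> snd z \<le> p}"
    and "y \<in> {z. psd (hpart (mat_of_vec (fst z))) \<and> snd z \<le> p}"
    and uv: "0 \<le> u" "0 \<le> v" "u + v = 1"
  moreover from this have "u * snd x + v * snd y \<le> p" by (intro convex_bound_le) auto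
  ultimately show "u *\<^sub>R x + v *\<^sub>R y \<in> {z. psd (hpart (mat_of_vec (fst z))) \<and> snd z \<le> p}"
    by (simp add: hpart_mat_of_vec_combination psd_combination)
qed

lemma primal_slack_combination:
  fixes \<rho> :: "('b::finite \<times> 'a::finite, 'b \<times> 'a) cmat"
  assumes "u + v = 1"
  shows "msub (msub (mtensor (mid :: ('b, 'b) cmat) (\<lambda>i j. complex_of_real u * X1 i j + complex_of_real v * X2 i j)) \<rho>)
      (hpart (mat_of_vec (u *\<^sub>R c1 + v *\<^sub>R c2))) =
    (\<lambda>i j. complex_of_real u * msub (msub (mtensor (mid :: ('b, 'b) cmat) X1) \<rho>) (hpart (mat_of_vec c1)) i j
      + complex_of_real v * msub (msub (mtensor (mid :: ('b, 'b) cmat) X2) \<rho>) (hpart (mat_of_vec c2)) i j)"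
proof (intro ext)
  fix i j :: "'b \<times> 'a"
  obtain b1 a1 b2 a2 where ij: "i = (b1, a1)" "j = (b2, a2)" by (cases i, cases j)
  let ?h1 = "hpart (mat_of_vec c1) i j" and ?h2 = "hpart (mat_of_vec c2) i j"
  let ?u = "complex_of_real u" and ?v = "complex_of_real v"
  have uv: "?u + ?v = 1" using assms by (metis of_real_1 of_real_add)
  have "msub (msub (mtensor (mid :: ('b, 'b) cmat) (\<lambda>i j. ?u * X1 i j + ?v * X2 i j)) \<rho>)
      (hpart (mat_of_vec (u *\<^sub>R c1 + v *\<^sub>R c2))) i j
     = mid b1 b2 * (?u * X1 a1 a2 + ?v * X2 a1 a2) - (?u + ?v) * \<rho> i j - (?u * ?h1 + ?v * ?h2)"
    unfolding hpart_mat_of_vec_combination msub_def ij mtensor_apply uv by simp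
  also have "\<dots> = ?u * (mid b1 b2 * X1 a1 a2 - \<rho> i j - ?h1) + ?v * (mid b1 b2 * X2 a1 a2 - \<rho> i j - ?h2)"
    by (simp add: algebra_simps)
  finally show "msub (msub (mtensor (mid :: ('b, 'b) cmat) (\<lambda>i j. ?u * X1 i j + ?v * X2 i j)) \<rho>)
      (hpart (mat_of_vec (u *\<^sub>R c1 + v *\<^sub>R c2))) i j =
    ?u * msub (msub (mtensor (mid :: ('b, 'b) cmat) X1) \<rho>) (hpart (mat_of_vec c1)) i j
      + ?v * msub (msub (mtensor (mid :: ('b, 'b) cmat) X2) \<rho>) (hpart (mat_of_vec c2)) i j"
    unfolding msub_def ij mtensor_apply .
qed

lemma convex_primal_epigraph:
  fixes \<rho> :: "('b::finite \<times> 'a::finite, 'b \<times> 'a) cmat"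
  shows "convex (primal_epigraph \<rho>)"
  unfolding convex_def
proof (intro ballI allI impI)
  fix x y :: "(complex ^ (('b \<times> 'a) \<times> ('b \<times> 'a))) \<times> real" and u v :: real
  assume "x \<in> primal_epigraph \<rho>" "y \<in> primal_epigraph \<rho>" and uv: "0 \<le> u" "0 \<le> v" "u + v = 1"
  then obtain X1 X2 where X1: "psd X1" "Re (mtr X1) < snd x"
      "psd (msub (msub (mtensor (mid :: ('b, 'b) cmat) X1) \<rho>) (hpart (mat_of_vec (fst x))))"
    and X2: "psd X2" "Re (mtr X2) < snd y"
      "psd (msub (msub (mtensor (mid :: ('b, 'b) cmat) X2) \<rho>) (hpart (mat_of_vec (fst y))))"
    unfolding primal_epigraph_def by blast
  define X where "X = (\<lambda>i j. complex_of_real u * X1 i j + complex_of_real v * X2 i j)"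
  have "psd X" unfolding X_def using X1(1) X2(1) uv by (intro psd_combination)
  moreover have "psd (msub (msub (mtensor (mid :: ('b, 'b) cmat) X) \<rho>) (hpart (mat_of_vec (fst (u *\<^sub>R x + v *\<^sub>R y)))))"
    using X1(3) X2(3) uv unfolding X_def fst_add fst_scaleR primal_slack_combination[OF uv(3)]
    by (simp add: psd_combination)
  moreover have "Re (mtr X) < snd (u *\<^sub>R x + v *\<^sub>R y)"
  proof -
    have "Re (mtr X) = u * Re (mtr X1) + v * Re (mtr X2)"
      unfolding X_def mtr_def by (simp add: sum.distrib sum_distrib_left)
    also have "\<dots> < u * snd x + v * snd y"
    proof (cases "u = 0")
      case True
      then show ?thesis using X2(2) uv by simp
    next
      case False
      then have "u * Re (mtr X1) < u * snd x" using X1(2) uv by simp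
      moreover have "v * Re (mtr X2) \<le> v * snd y" using X2(2) uv by (simp add: mult_left_mono)
      ultimately show ?thesis by simp
    qed
    finally show ?thesis by simp
  qed
  ultimately show "u *\<^sub>R x + v *\<^sub>R y \<in> primal_epigraph \<rho>"
    unfolding primal_epigraph_def by blast
qed

lemma psd_cone_below_primal_epigraph_disjoint:
  assumes "\<And>X. primal_feasible \<rho> X \<Longrightarrow> p \<le> Re (mtr X)"
  shows "psd_cone_below p \<inter> primal_epigraph \<rho> = {}"
proof (rule ccontr)
  assume "psd_cone_below p \<inter> primal_epigraph \<rho> \<noteq> {}"
  then obtain z X where z: "psd (hpart (mat_of_vec (fst z)))" "snd z \<le> p"
    and X: "psd X" "Re (mtr X) < snd z"
      "psd (msub (msub (mtensor mid X) \<rho>) (hpart (mat_of_vec (fst z))))"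
    unfolding psd_cone_below_def primal_epigraph_def by blast
  have "madd (msub (msub (mtensor mid X) \<rho>) (hpart (mat_of_vec (fst z)))) (hpart (mat_of_vec (fst z)))
      = msub (mtensor mid X) \<rho>"
    unfolding madd_def msub_def by simp
  then have "primal_feasible \<rho> X"
    using psd_madd[OF X(3) z(1)] X(1) unfolding primal_feasible_def by simp
  then have "p \<le> Re (mtr X)" by (rule assms)
  then show False using X(2) z(2) by simp
qed

definition sdp_separator ::
    "('b::finite \<times> 'a::finite, 'b \<times> 'a) cmat \<Rightarrow> real \<Rightarrow> ('b \<times> 'a, 'b \<times> 'a) cmat \<Rightarrow> real \<Rightarrow> real \<Rightarrow> bool" where
  "sdp_separator \<rho> p A lam b \<longleftrightarrow>
    (\<forall>v s. psd (hpart v) \<longrightarrow> s \<le> p \<longrightarrow> minner A v + lam * s \<le> b) \<and>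
    (\<forall>v s X. psd X \<longrightarrow> psd (msub (msub (mtensor (mid :: ('b, 'b) cmat) X) \<rho>) (hpart v)) \<longrightarrow>
      Re (mtr X) < s \<longrightarrow> b \<le> minner A v + lam * s)"

lemma sdp_separation:
  fixes \<rho> :: "('b::finite \<times> 'a::finite, 'b \<times> 'a) cmat"
  assumes feasible: "primal_feasible \<rho> X0"
    and lower: "\<And>X. primal_feasible \<rho> X \<Longrightarrow> p \<le> Re (mtr X)"
  obtains A lam b where "A \<noteq> (\<lambda>x y. 0) \<or> lam \<noteq> 0" "sdp_separator \<rho> p A lam b"
proof -
  have "(0, p) \<in> psd_cone_below p"
    unfolding psd_cone_below_def by (simp add: hpart_zero psd_zero mat_of_vec_def)
  moreover have "(0, Re (mtr X0) + 1) \<in> primal_epigraph \<rho>"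
    using feasible unfolding primal_epigraph_def primal_feasible_def
    by (auto simp: hpart_zero mat_of_vec_def msub_def)
  ultimately obtain a b where a: "a \<noteq> 0"
    and below: "\<forall>z\<in>psd_cone_below p. inner a z \<le> b" and above: "\<forall>z\<in>primal_epigraph \<rho>. b \<le> inner a z"
    using separating_hyperplane_sets[OF convex_psd_cone_below convex_primal_epigraph _ _
        psd_cone_below_primal_epigraph_disjoint[OF lower]] by blast
  obtain av lam where a_eq: "a = (av, lam)" by (cases a)
  have inner_a: "inner a (vec_of_mat v, s) = minner (mat_of_vec av) v + lam * s" for v s
    unfolding a_eq by (simp add: inner_prod_def inner_eq_minner)
  show ?thesis
  proof
    show "mat_of_vec av \<noteq> (\<lambda>x y. 0) \<or> lam \<noteq> 0"
      using a unfolding a_eq mat_of_vec_eq_zero_iff by (simp add: zero_prod_def)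
    show "sdp_separator \<rho> p (mat_of_vec av) lam b"
      unfolding sdp_separator_def
    proof (intro conjI allI impI)
      show "minner (mat_of_vec av) v + lam * s \<le> b" if "psd (hpart v)" "s \<le> p" for v s
        using below[rule_format, of "(vec_of_mat v, s)"] that unfolding inner_a psd_cone_below_def by simp
      show "b \<le> minner (mat_of_vec av) v + lam * s"
        if "psd X" "psd (msub (msub (mtensor (mid :: ('b, 'b) cmat) X) \<rho>) (hpart v))" "Re (mtr X) < s"
        for v s X
        using above[rule_format, of "(vec_of_mat v, s)"] that unfolding inner_a primal_epigraph_def by auto
    qed
  qed
qed

text \<open>The lower half-space contains \<open>(0, s)\<close> for \<open>s \<le> p\<close> and \<open>(t w w\<^sup>*, p)\<close> for \<open>t \<ge> 0\<close>.\<close>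
lemma separator_lower_half:
  assumes "sdp_separator \<rho> p A lam b"
  shows "0 \<le> lam" "lam * p \<le> b" "psd (\<lambda>x y. - hpart A x y)"
proof -
  have sep: "minner A v + lam * s \<le> b" if "psd (hpart v)" "s \<le> p" for v s
    using assms that unfolding sdp_separator_def by blast
  have "r * (- lam) + lam * p \<le> b" if "0 \<le> r" for r
    using sep[of "\<lambda>x y. 0" "p - r"] that by (simp add: hpart_zero psd_zero minner_zero algebra_simps)
  then show "0 \<le> lam" using nonpos_if_affine_bounded[of "- lam" "lam * p" b] by simp
  show "lam * p \<le> b"
    using sep[of "\<lambda>x y. 0" p] by (simp add: hpart_zero psd_zero minner_zero)
  show "psd (\<lambda>x y. - hpart A x y)"
    unfolding psd_iff_qform
  proof
    fix w
    have "t * Re (qform UNIV A w) + lam * p \<le> b" if "0 \<le> t" for t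
    proof -
      have "hpart (\<lambda>x y. complex_of_real t * (w x * cnj (w y))) = (\<lambda>x y. complex_of_real t * (w x * cnj (w y)))"
        by (rule hpart_hermitian) simp
      then show ?thesis
        using sep[of "\<lambda>x y. complex_of_real t * (w x * cnj (w y))" p] that
        by (simp add: psd_scale psd_rank_one minner_scale minner_rank_one)
    qed
    then have "Re (qform UNIV A w) \<le> 0" by (rule nonpos_if_affine_bounded)
    then show "0 \<le> qform UNIV (\<lambda>x y. - hpart A x y) w"
      unfolding qform_uminus qform_hpart by (simp add: complex_nonneg_iff)
  qed
qed

lemma hpart_msub_mtensor_mid:
  assumes "psd \<rho>" "psd X"
  shows "hpart (msub (mtensor (mid :: ('b::finite, 'b) cmat) X) \<rho>) = msub (mtensor mid X) \<rho>"
proof (rule hpart_hermitian)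
  fix x y :: "'b \<times> 'a"
  show "msub (mtensor (mid :: ('b, 'b) cmat) X) \<rho> y x = cnj (msub (mtensor mid X) \<rho> x y)"
    using psd_hermitian[OF assms(2), of "snd x" "snd y"] psd_hermitian[OF assms(1), of x y]
    unfolding msub_def mtensor_def mid_def by (cases x, cases y) auto
qed

lemma separator_at_primal_point:
  fixes \<rho> A :: "('b::finite \<times> 'a::finite, 'b \<times> 'a) cmat"
  assumes \<rho>: "psd \<rho>" and separator: "sdp_separator \<rho> p A lam b" and X: "psd X" and e: "0 < e"
  shows "b \<le> minner A (msub (mtensor (mid :: ('b, 'b) cmat) X) \<rho>) + lam * (Re (mtr X) + e)"
proof -
  have "psd (msub (msub (mtensor mid X) \<rho>) (hpart (msub (mtensor (mid :: ('b, 'b) cmat) X) \<rho>)))"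
    unfolding hpart_msub_mtensor_mid[OF \<rho> X] unfolding msub_def by (simp add: psd_zero)
  then show ?thesis using separator X e unfolding sdp_separator_def by simp
qed

lemma separator_le_minner:
  fixes \<rho> A :: "('b::finite \<times> 'a::finite, 'b \<times> 'a) cmat"
  assumes \<rho>: "psd \<rho>" and separator: "sdp_separator \<rho> p A lam b"
  shows "b \<le> - minner A \<rho>"
proof (rule field_le_epsilon)
  fix e :: real assume "0 < e"
  have lam: "0 \<le> lam" by (rule separator_lower_half(1)[OF separator])
  have "minner A (msub (mtensor (mid :: ('b, 'b) cmat) (\<lambda>x y. 0)) \<rho>) = - minner A \<rho>"
    unfolding msub_def mtensor_def minner_def by (simp add: case_prod_unfold sum_negf[symmetric])
  then have "b \<le> - minner A \<rho> + lam * (e / (lam + 1))"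
    using separator_at_primal_point[OF \<rho> separator psd_zero, of "e / (lam + 1)"] \<open>0 < e\<close> lam
    by (simp add: mtr_def)
  also have "lam * (e / (lam + 1)) \<le> e"
    using \<open>0 < e\<close> lam by (simp add: field_simps)
  finally show "b \<le> - minner A \<rho> + e" by simp
qed

lemma psd_separator_ptrace_fst:
  fixes \<rho> A :: "('b::finite \<times> 'a::finite, 'b \<times> 'a) cmat"
  assumes \<rho>: "psd \<rho>" and separator: "sdp_separator \<rho> p A lam b"
  shows "psd (\<lambda>x y. complex_of_real lam * mid x y + ptrace_fst (hpart A) x y)"
  unfolding psd_iff_qform
proof
  fix w :: "'a \<Rightarrow> complex"
  define N where "N = (\<Sum>x\<in>UNIV. (cmod (w x))\<^sup>2)"
  have bound: "b \<le> t * (Re (qform UNIV (ptrace_fst A) w) + lam * N) + (lam - minner A \<rho>)"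
    if "0 \<le> t" for t
  proof -
    define X where "X = (\<lambda>x y. complex_of_real t * (w x * cnj (w y)))"
    have "psd X" unfolding X_def using that by (intro psd_scale psd_rank_one)
    moreover have "Re (mtr X) = t * N" unfolding X_def mtr_scale mtr_rank_one N_def by simp
    moreover have "minner A (msub (mtensor (mid :: ('b, 'b) cmat) X) \<rho>) =
        t * Re (qform UNIV (ptrace_fst A) w) - minner A \<rho>"
      unfolding msub_def minner_diff X_def mtensor_scale minner_scale minner_mtensor_mid_rank_one ..
    ultimately show ?thesis
      using separator_at_primal_point[OF \<rho> separator, of X 1] by (simp add: algebra_simps)
  qed
  have "- (Re (qform UNIV (ptrace_fst A) w) + lam * N) \<le> 0"
  proof (rule nonpos_if_affine_bounded)
    fix t :: real assume "0 \<le> t"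
    then show "t * - (Re (qform UNIV (ptrace_fst A) w) + lam * N) + (minner A \<rho> - lam) \<le> - b"
      using bound[of t] by (simp add: algebra_simps)
  qed
  moreover have "qform UNIV (\<lambda>x y. complex_of_real lam * mid x y + ptrace_fst (hpart A) x y) w =
      complex_of_real lam * qform UNIV mid w + qform UNIV (ptrace_fst (hpart A)) w"
    unfolding qform_def by (simp add: algebra_simps sum.distrib sum_distrib_left)
  ultimately show "0 \<le> qform UNIV (\<lambda>x y. complex_of_real lam * mid x y + ptrace_fst (hpart A) x y) w"
    unfolding qform_mid ptrace_fst_hpart qform_hpart N_def by (simp add: complex_nonneg_iff)
qed

lemma separator_lam_pos:
  fixes \<rho> A :: "('b::finite \<times> 'a::finite, 'b \<times> 'a) cmat"
  assumes nonzero: "A \<noteq> (\<lambda>x y. 0) \<or> lam \<noteq> 0"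
    and \<rho>: "psd \<rho>" and separator: "sdp_separator \<rho> p A lam b"
  shows "0 < lam"
proof (rule ccontr)
  have sep: "minner A v + lam * s \<le> b" if "psd (hpart v)" "s \<le> p" for v s
    using separator that unfolding sdp_separator_def by blast
  note lam = separator_lower_half(1)[OF separator]
  note H = separator_lower_half(3)[OF separator]
  note M = psd_separator_ptrace_fst[OF \<rho> separator]
  assume "\<not> 0 < lam"
  then have lam0: "lam = 0" using lam by simp
  have "0 \<le> Re (mtr (ptrace_fst (hpart A)))" using mtr_psd_nonneg[OF M] unfolding lam0 by simp
  then have "Re (mtr (\<lambda>x y. - hpart A x y)) \<le> 0"
    unfolding mtr_ptrace_fst by (simp add: mtr_def sum_negf)
  then have "(\<lambda>x y. - hpart A x y) = (\<lambda>x y. 0)" by (rule psd_eq_zero_if_mtr_nonpos[OF H])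
  then have hpart_A: "hpart A = (\<lambda>x y. 0)" by (simp add: fun_eq_iff)
  have "t * minner A A + lam * p \<le> b" if "0 \<le> t" for t
  proof -
    have "hpart (\<lambda>x y. complex_of_real t * A x y) = (\<lambda>x y. 0)"
      unfolding hpart_scale hpart_A by simp
    then show ?thesis using sep[of "\<lambda>x y. complex_of_real t * A x y" p] by (simp add: psd_zero minner_scale)
  qed
  then have "minner A A \<le> 0" by (rule nonpos_if_affine_bounded)
  then show False using minner_self_eq_zero nonzero lam0 by blast
qed

text \<open>A positive \<open>H\<close> with \<open>ptrace_fst H \<le> 1\<close> is completed to a dual feasible point by adding
  the positive matrix \<open>(1 / |B|) \<otimes> (1 - ptrace_fst H)\<close>, which can only increase the objective.\<close>
lemma dual_feasible_completion:
  fixes \<rho> H :: "('b::finite \<times> 'a::finite, 'b \<times> 'a) cmat"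
  assumes \<rho>: "psd \<rho>" and H: "psd H" and P: "psd (msub mid (ptrace_fst H))"
  obtains Y where "dual_feasible Y" "Re (mtr (mmul \<rho> H)) \<le> Re (mtr (mmul \<rho> Y))"
proof
  define c where "c = 1 / real (card (UNIV :: 'b set))"
  define Z where "Z = mtensor (\<lambda>x y. complex_of_real c * (mid :: ('b, 'b) cmat) x y) (msub mid (ptrace_fst H))"
  have Z: "psd Z" unfolding Z_def c_def using P by (intro psd_mtensor psd_scale psd_mid) simp
  have "mtr (\<lambda>x y. complex_of_real c * (mid :: ('b, 'b) cmat) x y) = 1"
    unfolding mtr_scale mtr_mid c_def by simp
  then have "ptrace_fst (madd H Z) = mid"
    unfolding ptrace_fst_madd Z_def ptrace_fst_mtensor msub_def by simp
  then show "dual_feasible (madd H Z)"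
    unfolding dual_feasible_def using psd_madd[OF H Z] by simp
  show "Re (mtr (mmul \<rho> H)) \<le> Re (mtr (mmul \<rho> (madd H Z)))"
    using mtr_mmul_psd_nonneg[OF \<rho> Z] unfolding mtr_mmul_madd by (simp add: complex_nonneg_iff)
qed

theorem sdp_strong_duality:
  fixes \<rho> :: "('b::finite \<times> 'a::finite, 'b \<times> 'a) cmat"
  assumes \<rho>: "psd \<rho>"
  obtains Y where "dual_feasible Y" "primal_value \<rho> \<le> Re (mtr (mmul \<rho> Y))"
proof -
  obtain X0 where "primal_feasible \<rho> X0" using primal_feasible_exists[OF \<rho>] by blast
  then obtain A lam b where nonzero: "A \<noteq> (\<lambda>x y. 0) \<or> lam \<noteq> 0"
    and separator: "sdp_separator \<rho> (primal_value \<rho>) A lam b"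
    using sdp_separation[OF _ primal_value_le] by blast
  note L = separator_lower_half[OF separator]
  have lam: "0 < lam" by (rule separator_lam_pos[OF nonzero \<rho> separator])
  define H where "H = (\<lambda>x y. complex_of_real (- 1 / lam) * hpart A x y)"
  have "psd H"
    using psd_scale[of "\<lambda>x y. - hpart A x y" "1 / lam"] L(3) lam unfolding H_def by simp
  moreover have "msub mid (ptrace_fst H) =
      (\<lambda>x y. complex_of_real (1 / lam) * (complex_of_real lam * mid x y + ptrace_fst (hpart A) x y))"
  proof (intro ext)
    fix x y
    have "ptrace_fst H x y = complex_of_real (- 1 / lam) * ptrace_fst (hpart A) x y"
      unfolding H_def ptrace_fst_def by (simp add: sum_distrib_left)
    then show "msub mid (ptrace_fst H) x y =
        complex_of_real (1 / lam) * (complex_of_real lam * mid x y + ptrace_fst (hpart A) x y)"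
      using lam unfolding msub_def by (simp add: field_simps)
  qed
  then have "psd (msub mid (ptrace_fst H))"
    using psd_scale[of "\<lambda>x y. complex_of_real lam * mid x y + ptrace_fst (hpart A) x y" "1 / lam"]
      psd_separator_ptrace_fst[OF \<rho> separator] lam
    by simp
  moreover have value_H: "primal_value \<rho> \<le> Re (mtr (mmul \<rho> H))"
  proof -
    have "Re (mtr (mmul \<rho> (hpart A))) = minner A \<rho>"
      by (rule Re_mtr_mmul_hpart) (rule psd_hermitian[OF \<rho>])
    then have "Re (mtr (mmul \<rho> H)) = - minner A \<rho> / lam"
      unfolding H_def mtr_mmul_scale by simp
    moreover have "lam * primal_value \<rho> \<le> - minner A \<rho>" using L(2) separator_le_minner[OF \<rho> separator] by (simp add: mult.commute)
    ultimately show ?thesis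
      using pos_le_divide_eq[OF lam, of "primal_value \<rho>" "- minner A \<rho>"] by (simp add: mult.commute)
  qed
  ultimately obtain Y where Y: "dual_feasible Y" "Re (mtr (mmul \<rho> H)) \<le> Re (mtr (mmul \<rho> Y))"
    using dual_feasible_completion[OF \<rho>] by blast
  show ?thesis using that[OF Y(1)] Y(2) value_H by linarith
qed

context
  fixes \<mu> :: "'g::topological_group_add measure"
    and UA :: "'g \<Rightarrow> ('a::finite, 'a) cmat"
    and UB :: "'g \<Rightarrow> ('b::finite, 'b) cmat"
  assumes compact: "compact (UNIV :: 'g set)" and haar: "haar_prob \<mu>"
    and UA: "cont_unitary_rep UA" and UB: "cont_unitary_rep UB"
begin

lemma unitary_UA: "unitary_mat (UA g)"
  using UA unfolding cont_unitary_rep_def by blast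

lemma covariant_channel_objective_le:
  fixes \<eta> :: "('b, 'b) cmat" and \<tau> :: "('a, 'a) cmat"
  assumes \<sigma>: "psd (mtensor \<eta> \<tau>)" and E: "quantum_channel E" "covariant UA UB E"
  shows "Re (mtr (mmul (mtransp \<eta>) (E \<tau>))) \<le> primal_value (twirl \<mu> UA UB (mtensor \<eta> \<tau>))"
proof -
  let ?Y = "choi_matrix E"
  have choi: "choi_channel ?Y = E" and Y: "dual_feasible ?Y"
    using quantum_channel_choi_matrix[OF E(1)] unfolding dual_feasible_def by auto
  have "covariant UA UB (choi_channel ?Y)" using E(2) choi by simp
  then have invariant: "\<And>g. sandwich (rep_RA UA UB g) ?Y = ?Y"
    using covariant_choi_channel_iff[where UA = UA and UB = UB, OF unitary_UA] by blast
  have "mtr (mmul (mtransp \<eta>) (E \<tau>)) = mtr (mmul (mtensor \<eta> \<tau>) ?Y)"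
    using mtr_mtransp_choi_channel[of \<eta> ?Y \<tau>] choi by simp
  also have "\<dots> = mtr (mmul (twirl \<mu> UA UB (mtensor \<eta> \<tau>)) ?Y)"
    by (rule mtr_mmul_twirl_invariant[OF compact haar UA UB invariant, symmetric])
  finally show ?thesis
    using dual_le_primal_value[OF psd_twirl[OF compact haar UA UB \<sigma>] Y] by simp
qed

text \<open>An optimal dual point, twirled so that it becomes invariant, is the Choi matrix of an
  optimal covariant channel.\<close>
lemma covariant_channel_attaining:
  fixes \<eta> :: "('b, 'b) cmat" and \<tau> :: "('a, 'a) cmat"
  assumes \<sigma>: "psd (mtensor \<eta> \<tau>)"
  obtains E where "quantum_channel E" "covariant UA UB E" "0 \<le> mtr (mmul (mtransp \<eta>) (E \<tau>))"
    "primal_value (twirl \<mu> UA UB (mtensor \<eta> \<tau>)) \<le> Re (mtr (mmul (mtransp \<eta>) (E \<tau>)))"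
proof -
  let ?\<rho> = "twirl \<mu> UA UB (mtensor \<eta> \<tau>)"
  obtain Y where Y: "dual_feasible Y" "primal_value ?\<rho> \<le> Re (mtr (mmul ?\<rho> Y))"
    using sdp_strong_duality[OF psd_twirl[OF compact haar UA UB \<sigma>]] by blast
  define Y' where "Y' = twirl_adjoint \<mu> UA UB Y"
  have psd_Y': "psd Y'"
    unfolding Y'_def using Y(1) by (intro psd_twirl_adjoint[OF compact haar UA UB]) (simp add: dual_feasible_def)
  have "ptrace_fst Y' = mid"
    unfolding Y'_def using Y(1) by (intro ptrace_fst_twirl_adjoint[OF compact haar UA UB])
      (simp add: dual_feasible_def)
  then have "quantum_channel (choi_channel Y')" by (rule quantum_channel_choi_channel[OF psd_Y'])
  moreover have "covariant UA UB (choi_channel Y')"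
    using covariant_choi_channel_iff[where UA = UA and UB = UB, OF unitary_UA]
      sandwich_twirl_adjoint[OF compact haar UA UB] unfolding Y'_def by blast
  moreover have "0 \<le> mtr (mmul (mtransp \<eta>) (choi_channel Y' \<tau>))"
    unfolding mtr_mtransp_choi_channel by (rule mtr_mmul_psd_nonneg[OF \<sigma> psd_Y'])
  moreover have "mtr (mmul (mtransp \<eta>) (choi_channel Y' \<tau>)) = mtr (mmul ?\<rho> Y)"
    unfolding mtr_mtransp_choi_channel Y'_def by (rule mtr_mmul_twirl_adjoint[OF compact haar UA UB])
  ultimately show ?thesis using that Y(2) by simp
qed

end

theorem lemma5:
  fixes \<mu> :: "'g::topological_group_add measure"
    and UA :: "'g \<Rightarrow> ('a::finite, 'a) cmat"
    and UB :: "'g \<Rightarrow> ('b::finite, 'b) cmat"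
    and \<eta> :: "('b, 'b) cmat" and \<tau> :: "('a, 'a) cmat"
  assumes "compact (UNIV :: 'g set)"
    and "haar_prob \<mu>"
    and "cont_unitary_rep UA" and "cont_unitary_rep UB"
    and "is_state \<eta>" and "is_state \<tau>"
  shows "(\<exists>E. quantum_channel E \<and> covariant UA UB E \<and>
            mtr (mmul (mtransp \<eta>) (E \<tau>)) = complex_of_real (Phi \<mu> UA UB \<eta> \<tau>))
       \<and> (\<forall>E. quantum_channel E \<and> covariant UA UB E \<longrightarrow>
            Re (mtr (mmul (mtransp \<eta>) (E \<tau>))) \<le> Phi \<mu> UA UB \<eta> \<tau>)"
proof -
  have \<sigma>: "psd (mtensor \<eta> \<tau>)" using assms(5,6) unfolding is_state_def by (intro psd_mtensor) auto
  have Phi: "Phi \<mu> UA UB \<eta> \<tau> = primal_value (twirl \<mu> UA UB (mtensor \<eta> \<tau>))"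
    unfolding Phi_def primal_value_def primal_feasible_def ..
  note upper = covariant_channel_objective_le[OF assms(1-4) \<sigma>]
  obtain E where E: "quantum_channel E" "covariant UA UB E" "0 \<le> mtr (mmul (mtransp \<eta>) (E \<tau>))"
    "primal_value (twirl \<mu> UA UB (mtensor \<eta> \<tau>)) \<le> Re (mtr (mmul (mtransp \<eta>) (E \<tau>)))"
    by (rule covariant_channel_attaining[OF assms(1-4) \<sigma>])
  have "mtr (mmul (mtransp \<eta>) (E \<tau>)) = complex_of_real (Phi \<mu> UA UB \<eta> \<tau>)"
    using upper[OF E(1,2)] E(3,4) unfolding Phi by (simp add: complex_eq_iff complex_nonneg_iff)
  then show ?thesis using E(1,2) upper unfolding Phi by blast
qed

end
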